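(* Let $\sigma>0$, $\bar\gamma>0$, $c_\infty\ge0$, and for $\gamma\in(0,\bar\gamma]$ let $\tau_\gamma:[0,\infty)\to[0,\infty)$ be non-decreasing with $\tau_\gamma(0)=0$, such that there exist $R_1,L\ge0$, $m>0$ with $\sup_{r>0}\tau_\gamma(r)/r\le1+\gamma L$ and $\sup_{r>R_1}\tau_\gamma(r)/r\le1-\gamma m$ for all $\gamma\in(0,\bar\gamma]$. Let $Q_\gamma$ be the Markov kernel on $[0,\infty)$ $$Q_\gamma(w,A)=\delta_0(A)\int_{\mathbb{R}}\bar p_{\sigma^2\gamma}(\tau_\gamma(w)+\gamma c_\infty,g)\varphi(g)dg+\int_{\mathbb{R}}\mathbb{1}_A(\tau_\gamma(w)+\gamma c_\infty-2\sigma\gamma^{1/2}g)\{1-\bar p_{\sigma^2\gamma}(\tau_\gamma(w)+\gamma c_\infty,g)\}\varphi(g)dg,$$ with $\bar p_{\sigma^2\gamma}(a,g)=1\wedge\varphi_{\sigma^2\gamma}(a-\sigma\sqrt\gamma g)/\varphi_{\sigma^2\gamma}(\sigma\sqrt\gamma g)$, and let $\mu_\gamma$ be its unique invariant probability measure. Then for any $a>0$ there exist explicit constants $\bar\gamma_1\in(0,\bar\gamma]$ and $c_3\ge0$ (not depending on $\gamma$) such that for all $\gamma\in(0,\bar\gamma_1]$, $$\int_{[0,\infty)}[\exp(aw)-1]\,\mu_\gamma(dw)\le c_\infty c_3.$$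
   Context: $\varphi$ is the standard normal density and $\varphi_s(t)=(2\pi s)^{-1/2}e^{-t^2/(2s)}$. *)

theory Defs
  imports "HOL-Probability.Probability"
begin

definition phi_var :: "real \<Rightarrow> real \<Rightarrow> real" where
  "phi_var s t = (2 * pi * s) powr (-1/2) * exp (- (t^2) / (2 * s))"

definition phi :: "real \<Rightarrow> real" where
  "phi t = phi_var 1 t"

definition pbar :: "real \<Rightarrow> real \<Rightarrow> real \<Rightarrow> real" where
  "pbar s a g = min 1 (phi_var s (a - sqrt s * g) / phi_var s (sqrt s * g))"

definition Qker :: "real \<Rightarrow> real \<Rightarrow> (real \<Rightarrow> real \<Rightarrow> real) \<Rightarrow> real \<Rightarrow> real \<Rightarrow> real set \<Rightarrow> real" where
  "Qker \<sigma> cinf \<tau> \<gamma> w A =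
     indicator A (0::real) *
       (LINT g|lborel. pbar (\<sigma>^2 * \<gamma>) (\<tau> \<gamma> w + \<gamma> * cinf) g * phi g)
   + (LINT g|lborel. indicator A (\<tau> \<gamma> w + \<gamma> * cinf - 2 * \<sigma> * sqrt \<gamma> * g)
        * (1 - pbar (\<sigma>^2 * \<gamma>) (\<tau> \<gamma> w + \<gamma> * cinf) g) * phi g)"

end

theory Submission
  imports Defs
begin

text \<open>The function \<open>V(w) = E(w / \<ell>) + A sinh (a w)\<close>, with \<open>E(v) = \<integral>\<^sub>0\<^sup>v exp (- r\<^sup>2 / 2) dr\<close> and
  \<open>\<ell> = \<sigma> / \<surd>(L + 1)\<close>, satisfies a drift inequality \<open>Q\<^sub>\<gamma> V \<le> (1 - \<kappa> \<gamma>) V + \<gamma> c\<^sub>\<infinity> C\<close> on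
  \<open>[0, \<infinity>)\<close> for small \<open>\<gamma>\<close>. Since \<open>V\<close> is odd, the mass that \<open>Q\<^sub>\<gamma>\<close> sends to \<open>0\<close> and the
  \<open>pbar\<close>-weighted part of the Gaussian move cancel out by symmetry, so \<open>Q\<^sub>\<gamma> V\<close> is the plain
  Gaussian smoothing of \<open>V\<close> at \<open>\<tau>\<^sub>\<gamma>(w) + \<gamma> c\<^sub>\<infinity>\<close>: it turns \<open>E(v)\<close> into
  \<open>E(v / \<surd>(1 + 4 \<gamma> (L + 1)))\<close> and \<open>sinh (a x)\<close> into \<open>exp (2 a\<^sup>2 \<sigma>\<^sup>2 \<gamma>) sinh (a x)\<close>. Near \<open>0\<close>
  the concavity of \<open>E\<close> absorbs the expansion \<open>1 + \<gamma> L\<close> of \<open>\<tau>\<^sub>\<gamma>\<close> and the Gaussian factor; beyond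
  \<open>R\<^sub>1\<close> the contraction \<open>1 - \<gamma> m\<close> of \<open>\<tau>\<^sub>\<gamma>\<close> does. Integrating the drift inequality against the
  invariant measure gives \<open>\<integral> V d\<mu>\<^sub>\<gamma> \<le> c\<^sub>\<infinity> C / \<kappa>\<close>, and \<open>exp (a w) - 1 \<le> 2 sinh (a w) \<le> 2 V(w) / A\<close>.\<close>

section \<open>Gaussian integrals\<close>

lemma phi_eq_std_normal_density: "phi t = std_normal_density t"
  unfolding phi_def phi_var_def std_normal_density_def
  by (simp add: powr_minus_divide powr_half_sqrt[symmetric] divide_simps)

lemma exp_mult_std_normal_density:
  "exp (t * g) * std_normal_density g = exp (t\<^sup>2 / 2) * normal_density t 1 g"
proof -
  have "t * g + - g\<^sup>2 / 2 = t\<^sup>2 / 2 + - (g - t)\<^sup>2 / 2"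
    by (simp add: power2_eq_square field_simps)
  then show ?thesis
    unfolding std_normal_density_def normal_density_def by (simp add: mult_exp_exp)
qed

lemma integrable_exp_std_normal: "integrable lborel (\<lambda>g. exp (t * g) * std_normal_density g)"
  unfolding exp_mult_std_normal_density by simp

lemma integral_exp_std_normal: "(\<integral>g. exp (t * g) * std_normal_density g \<partial>lborel) = exp (t\<^sup>2 / 2)"
  unfolding exp_mult_std_normal_density by simp

lemma sinh_shift_std_normal_eq:
  "sinh (b * (x - h * g)) * std_normal_density g
     = exp (b * x) / 2 * (exp ((- b * h) * g) * std_normal_density g)
       - exp (- b * x) / 2 * (exp ((b * h) * g) * std_normal_density g)"
  unfolding sinh_def by (simp add: algebra_simps exp_diff exp_add[symmetric] diff_divide_distrib)

lemma integrable_sinh_shift_std_normal: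
  "integrable lborel (\<lambda>g. sinh (b * (x - h * g)) * std_normal_density g)"
  unfolding sinh_shift_std_normal_eq
  by (intro Bochner_Integration.integrable_diff integrable_mult_right integrable_exp_std_normal)

lemma integral_sinh_shift_std_normal:
  "(\<integral>g. sinh (b * (x - h * g)) * std_normal_density g \<partial>lborel) = exp ((b * h)\<^sup>2 / 2) * sinh (b * x)"
proof -
  have "(\<integral>g. sinh (b * (x - h * g)) * std_normal_density g \<partial>lborel)
      = exp (b * x) / 2 * exp ((- b * h)\<^sup>2 / 2) - exp (- b * x) / 2 * exp ((b * h)\<^sup>2 / 2)"
    unfolding sinh_shift_std_normal_eq
    by (subst Bochner_Integration.integral_diff)
       (simp_all only: integrable_mult_right integrable_exp_std_normal integral_mult_right_zero
         integral_exp_std_normal)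
  also have "\<dots> = exp ((b * h)\<^sup>2 / 2) * sinh (b * x)"
    unfolding sinh_def by (simp add: algebra_simps diff_divide_distrib power2_eq_square)
  finally show ?thesis .
qed

section \<open>The Gaussian error function\<close>

definition gauss :: "real \<Rightarrow> real" where
  "gauss y = exp (- y\<^sup>2 / 2)"

lemma gauss_pos: "0 < gauss y"
  unfolding gauss_def by simp

lemma gauss_le_1: "gauss y \<le> 1"
  unfolding gauss_def by simp

lemma gauss_antimono_abs: "\<bar>x\<bar> \<le> \<bar>y\<bar> \<Longrightarrow> gauss y \<le> gauss x"
  unfolding gauss_def by (simp add: abs_le_square_iff)

lemma gauss_eq_normal_density: "gauss y = sqrt (2 * pi) * normal_density 0 1 y"
  unfolding gauss_def normal_density_def by simp

lemma borel_measurable_gauss [measurable]: "gauss \<in> borel_measurable borel"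
  unfolding gauss_def by measurable

lemma nn_integral_gauss_finite: "(\<integral>\<^sup>+r. ennreal (gauss r) \<partial>lborel) < \<infinity>"
proof -
  have "(\<integral>\<^sup>+r. ennreal (gauss r) \<partial>lborel) = ennreal (sqrt (2 * pi))"
    unfolding gauss_eq_normal_density
    by (subst nn_integral_eq_integral) (auto intro!: mult_nonneg_nonneg)
  then show ?thesis by simp
qed

lemma nn_integral_gauss_shift_std_normal:
  fixes r t :: real
  assumes t: "t \<noteq> 0"
  defines "s \<equiv> sqrt (1 + t\<^sup>2)"
  shows "(\<integral>\<^sup>+g. ennreal (gauss (r - t * g) * std_normal_density g) \<partial>lborel) = ennreal (gauss (r / s) / s)"
proof -
  define F where "F y = ennreal (normal_density 0 1 (r - y) * normal_density 0 \<bar>t\<bar> y)" for y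
  have s: "s > 0" unfolding s_def by (simp add: add_pos_nonneg)
  have std: "std_normal_density g = \<bar>t\<bar> * normal_density 0 \<bar>t\<bar> (t * g)" for g
    using t by (simp add: normal_density_def power_mult_distrib real_sqrt_mult)
  have F [measurable]: "F \<in> borel_measurable borel"
    unfolding F_def by measurable
  have "(\<integral>\<^sup>+g. ennreal (gauss (r - t * g) * std_normal_density g) \<partial>lborel)
      = (\<integral>\<^sup>+g. ennreal (sqrt (2 * pi)) * (ennreal \<bar>t\<bar> * F (0 + t * g)) \<partial>lborel)"
    unfolding F_def gauss_eq_normal_density std using t
    by (intro nn_integral_cong) (simp add: ennreal_mult'[symmetric] mult_ac)
  also have "\<dots> = ennreal (sqrt (2 * pi)) * (ennreal \<bar>t\<bar> * (\<integral>\<^sup>+g. F (0 + t * g) \<partial>lborel))"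
    by (simp add: nn_integral_cmult)
  also have "ennreal \<bar>t\<bar> * (\<integral>\<^sup>+g. F (0 + t * g) \<partial>lborel) = (\<integral>\<^sup>+y. F y \<partial>lborel)"
    using t by (intro nn_integral_real_affine[symmetric]) auto
  also have "\<dots> = ennreal (normal_density 0 s r)"
    unfolding F_def s_def using conv_normal_density_zero_mean[of 1 "\<bar>t\<bar>"] t by (simp add: fun_eq_iff)
  also have "ennreal (sqrt (2 * pi)) * ennreal (normal_density 0 s r) = ennreal (gauss (r / s) / s)"
    unfolding gauss_def normal_density_def using s
    by (simp add: ennreal_mult'[symmetric] real_sqrt_mult power_divide)
  finally show ?thesis .
qed

definition gauss_tail :: "real \<Rightarrow> real" where
  "gauss_tail v = enn2real (\<integral>\<^sup>+r. ennreal (indicator {v..} r * gauss r) \<partial>lborel)"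

lemma nn_integral_gauss_tail:
  "(\<integral>\<^sup>+r. ennreal (indicator {v..} r * gauss r) \<partial>lborel) = ennreal (gauss_tail v)"
proof -
  have "(\<integral>\<^sup>+r. ennreal (indicator {v..} r * gauss r) \<partial>lborel) \<le> (\<integral>\<^sup>+r. ennreal (gauss r) \<partial>lborel)"
    by (intro nn_integral_mono) (auto simp: indicator_def)
  then have "(\<integral>\<^sup>+r. ennreal (indicator {v..} r * gauss r) \<partial>lborel) < \<infinity>"
    using nn_integral_gauss_finite by (rule le_less_trans)
  then show ?thesis
    unfolding gauss_tail_def by (simp add: less_top[symmetric])
qed

lemma gauss_tail_nonneg: "0 \<le> gauss_tail v"
  unfolding gauss_tail_def by simp

lemma gauss_tail_le: "gauss_tail v \<le> enn2real (\<integral>\<^sup>+r. ennreal (gauss r) \<partial>lborel)"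
  unfolding gauss_tail_def using nn_integral_gauss_finite
  by (intro enn2real_mono nn_integral_mono) (auto simp: indicator_def)

lemma gauss_tail_diff_bounds:
  assumes ab: "a \<le> b" and m: "0 \<le> m" "\<And>x. a \<le> x \<Longrightarrow> x \<le> b \<Longrightarrow> m \<le> gauss x"
  shows "m * (b - a) \<le> gauss_tail a - gauss_tail b" and "gauss_tail a - gauss_tail b \<le> b - a"
proof -
  define I where "I = (\<integral>\<^sup>+r. ennreal (indicator {a..<b} r * gauss r) \<partial>lborel)"
  have "ennreal (gauss_tail a) = (\<integral>\<^sup>+r. ennreal (indicator {b..} r * gauss r) + ennreal (indicator {a..<b} r * gauss r) \<partial>lborel)"
    unfolding nn_integral_gauss_tail[symmetric] using ab
    by (intro nn_integral_cong) (auto simp: indicator_def gauss_pos less_imp_le)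
  also have "\<dots> = ennreal (gauss_tail b) + I"
    unfolding I_def nn_integral_gauss_tail[symmetric] by (rule nn_integral_add) auto
  finally have split: "ennreal (gauss_tail a) = ennreal (gauss_tail b) + I" .
  have upper: "I \<le> ennreal (b - a)"
  proof -
    have "I \<le> (\<integral>\<^sup>+r. ennreal (indicator {a..<b} r) \<partial>lborel)"
      unfolding I_def by (intro nn_integral_mono) (auto simp: indicator_def gauss_le_1)
    also have "\<dots> = ennreal (b - a)" using ab by (simp add: ennreal_indicator)
    finally show ?thesis .
  qed
  have lower: "ennreal (m * (b - a)) \<le> I"
  proof -
    have "ennreal (m * (b - a)) = (\<integral>\<^sup>+r. ennreal m * ennreal (indicator {a..<b} r) \<partial>lborel)"
      using ab m by (subst nn_integral_cmult) (auto simp: ennreal_mult ennreal_indicator)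
    also have "\<dots> \<le> I"
      unfolding I_def using m by (intro nn_integral_mono) (auto simp: indicator_def ennreal_leI)
    finally show ?thesis .
  qed
  have fin: "I < top"
    using upper by (simp add: le_less_trans)
  have eq: "gauss_tail a = gauss_tail b + enn2real I"
  proof -
    have "ennreal (gauss_tail a) = ennreal (gauss_tail b + enn2real I)"
      using split fin by (subst ennreal_plus) (auto simp: gauss_tail_nonneg)
    then show ?thesis
      using gauss_tail_nonneg[of a] gauss_tail_nonneg[of b] by (subst (asm) ennreal_inj) auto
  qed
  show "m * (b - a) \<le> gauss_tail a - gauss_tail b"
    using enn2real_mono[OF lower fin] eq m ab by simp
  show "gauss_tail a - gauss_tail b \<le> b - a"
    using enn2real_mono[OF upper] eq ab by simp
qed

lemma gauss_tail_antimono: "a \<le> b \<Longrightarrow> gauss_tail b \<le> gauss_tail a"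
  using gauss_tail_diff_bounds(1)[of a b 0] by (simp add: less_imp_le gauss_pos)

lemma borel_measurable_gauss_tail [measurable]: "gauss_tail \<in> borel_measurable borel"
proof -
  have "(\<lambda>v. - gauss_tail v) \<in> borel_measurable borel"
    by (rule borel_measurable_mono) (auto simp: mono_def intro!: gauss_tail_antimono)
  then have "(\<lambda>v. - (- gauss_tail v)) \<in> borel_measurable borel"
    by (rule borel_measurable_uminus)
  then show ?thesis by simp
qed

lemma nn_integral_gauss_tail_shift_std_normal:
  fixes t v :: real
  assumes t: "t \<noteq> 0"
  shows "(\<integral>\<^sup>+g. ennreal (gauss_tail (v - t * g) * std_normal_density g) \<partial>lborel)
    = ennreal (gauss_tail (v / sqrt (1 + t\<^sup>2)))"
proof -
  define s where "s = sqrt (1 + t\<^sup>2)"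
  have s: "s > 0" unfolding s_def by (simp add: add_pos_nonneg)
  have "(\<integral>\<^sup>+g. ennreal (gauss_tail (v - t * g) * std_normal_density g) \<partial>lborel)
      = (\<integral>\<^sup>+g. (\<integral>\<^sup>+r. ennreal (indicator {v..} r * (gauss (r - t * g) * std_normal_density g)) \<partial>lborel) \<partial>lborel)"
  proof (intro nn_integral_cong)
    fix g
    have "ennreal (gauss_tail (v - t * g)) = (\<integral>\<^sup>+r. ennreal (indicator {v..} r * gauss (r - t * g)) \<partial>lborel)"
      unfolding nn_integral_gauss_tail[symmetric]
      by (subst nn_integral_real_affine[where c=1 and t="- (t * g)"])
         (auto intro!: nn_integral_cong simp: indicator_def)
    then have "ennreal (gauss_tail (v - t * g) * std_normal_density g)
        = (\<integral>\<^sup>+r. ennreal (indicator {v..} r * gauss (r - t * g)) * ennreal (std_normal_density g) \<partial>lborel)"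
      by (simp add: ennreal_mult gauss_tail_nonneg nn_integral_multc)
    then show "ennreal (gauss_tail (v - t * g) * std_normal_density g)
        = (\<integral>\<^sup>+r. ennreal (indicator {v..} r * (gauss (r - t * g) * std_normal_density g)) \<partial>lborel)"
      by (simp add: ennreal_mult'[symmetric] mult.assoc gauss_pos less_imp_le)
  qed
  also have "\<dots> = (\<integral>\<^sup>+r. (\<integral>\<^sup>+g. ennreal (indicator {v..} r * (gauss (r - t * g) * std_normal_density g)) \<partial>lborel) \<partial>lborel)"
    by (rule lborel_pair.Fubini') measurable
  also have "\<dots> = (\<integral>\<^sup>+r. ennreal (indicator {v..} r) * (\<integral>\<^sup>+g. ennreal (gauss (r - t * g) * std_normal_density g) \<partial>lborel) \<partial>lborel)"
    by (intro nn_integral_cong, subst nn_integral_cmult[symmetric])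
       (auto intro!: nn_integral_cong simp: ennreal_mult[symmetric] gauss_pos less_imp_le mult.assoc)
  also have "\<dots> = (\<integral>\<^sup>+r. ennreal (indicator {v..} r * (gauss (r / s) / s)) \<partial>lborel)"
    unfolding nn_integral_gauss_shift_std_normal[OF t, folded s_def]
    by (intro nn_integral_cong) (simp add: ennreal_mult'[symmetric])
  also have "\<dots> = ennreal s * (\<integral>\<^sup>+r. ennreal (indicator {v..} (0 + s * r) * (gauss ((0 + s * r) / s) / s)) \<partial>lborel)"
    using s by (subst nn_integral_real_affine[where c=s and t=0]) auto
  also have "\<dots> = (\<integral>\<^sup>+r. ennreal s * ennreal (indicator {v..} (0 + s * r) * (gauss ((0 + s * r) / s) / s)) \<partial>lborel)"
    by (rule nn_integral_cmult[symmetric]) measurable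
  also have "\<dots> = (\<integral>\<^sup>+r. ennreal (indicator {v / s..} r * gauss r) \<partial>lborel)"
    using s by (intro nn_integral_cong) (simp add: ennreal_mult'[symmetric] indicator_def pos_divide_le_eq mult.commute)
  finally show ?thesis unfolding s_def nn_integral_gauss_tail .
qed

lemma integrable_gauss_tail_shift_std_normal:
  "integrable lborel (\<lambda>g. gauss_tail (v - t * g) * std_normal_density g)"
proof (rule Bochner_Integration.integrable_bound)
  define B where "B = enn2real (\<integral>\<^sup>+r. ennreal (gauss r) \<partial>lborel)"
  show "integrable lborel (\<lambda>g. B * std_normal_density g)"
    by simp
  show "AE g in lborel. norm (gauss_tail (v - t * g) * std_normal_density g) \<le> norm (B * std_normal_density g)"
    using gauss_tail_le gauss_tail_nonneg unfolding B_def
    by (intro AE_I2) (simp add: abs_mult mult_right_mono)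
qed measurable

lemma integral_gauss_tail_shift_std_normal:
  assumes "t \<noteq> 0"
  shows "(\<integral>g. gauss_tail (v - t * g) * std_normal_density g \<partial>lborel) = gauss_tail (v / sqrt (1 + t\<^sup>2))"
proof -
  have "(\<integral>g. gauss_tail (v - t * g) * std_normal_density g \<partial>lborel)
      = enn2real (\<integral>\<^sup>+g. ennreal (gauss_tail (v - t * g) * std_normal_density g) \<partial>lborel)"
    by (rule integral_eq_nn_integral) (auto simp: gauss_tail_nonneg)
  then show ?thesis
    by (simp add: nn_integral_gauss_tail_shift_std_normal[OF assms] gauss_tail_nonneg)
qed

text \<open>\<open>gauss_erf v = \<integral>\<^sub>0\<^sup>v exp (- r\<^sup>2 / 2) dr = \<surd>(\<pi> / 2) erf (v / \<surd>2)\<close>. It is written through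
  tails so that its Gaussian smoothing follows from that of the tails.\<close>
definition gauss_erf :: "real \<Rightarrow> real" where
  "gauss_erf v = (gauss_tail (- v) - gauss_tail v) / 2"

lemma gauss_erf_0 [simp]: "gauss_erf 0 = 0"
  unfolding gauss_erf_def by simp

lemma gauss_erf_minus: "gauss_erf (- v) = - gauss_erf v"
  unfolding gauss_erf_def by (simp add: field_simps)

lemma gauss_erf_mono: "v1 \<le> v2 \<Longrightarrow> gauss_erf v1 \<le> gauss_erf v2"
  unfolding gauss_erf_def using gauss_tail_antimono[of v1 v2] gauss_tail_antimono[of "- v2" "- v1"]
  by simp

lemma borel_measurable_gauss_erf [measurable]: "gauss_erf \<in> borel_measurable borel"
  by (rule borel_measurable_mono) (auto simp: mono_def intro: gauss_erf_mono)

lemma gauss_erf_lipschitz: "v1 \<le> v2 \<Longrightarrow> gauss_erf v2 - gauss_erf v1 \<le> v2 - v1"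
  unfolding gauss_erf_def
  using gauss_tail_diff_bounds(2)[of v1 v2 0] gauss_tail_diff_bounds(2)[of "- v2" "- v1" 0]
  by (simp add: gauss_pos less_imp_le field_simps)

lemma gauss_erf_nonneg: "0 \<le> v \<Longrightarrow> 0 \<le> gauss_erf v"
  using gauss_erf_mono[of 0 v] by simp

lemma gauss_erf_le: "0 \<le> v \<Longrightarrow> gauss_erf v \<le> v"
  using gauss_erf_lipschitz[of 0 v] by simp

lemma gauss_erf_shrink:
  assumes "0 \<le> v" "0 \<le> q" "q \<le> 1"
  shows "(1 - q) * v * gauss v \<le> gauss_erf v - gauss_erf (q * v)"
proof -
  have qv: "0 \<le> q * v" "q * v \<le> v"
    using assms by (auto simp: mult_left_le_one_le)
  have right: "gauss v * (v - q * v) \<le> gauss_tail (q * v) - gauss_tail v"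
    using qv by (intro gauss_tail_diff_bounds(1)) (auto simp: gauss_pos less_imp_le intro!: gauss_antimono_abs)
  have "gauss v * (- (q * v) - - v) \<le> gauss_tail (- v) - gauss_tail (- (q * v))"
    using qv by (intro gauss_tail_diff_bounds(1)) (auto simp: gauss_pos less_imp_le intro!: gauss_antimono_abs)
  then have left: "gauss v * (v - q * v) \<le> gauss_tail (- v) - gauss_tail (- (q * v))"
    by (simp add: algebra_simps)
  have "(1 - q) * v * gauss v = (gauss v * (v - q * v) + gauss v * (v - q * v)) / 2"
    by (simp add: algebra_simps)
  also have "\<dots> \<le> ((gauss_tail (q * v) - gauss_tail v) + (gauss_tail (- v) - gauss_tail (- (q * v)))) / 2"
    using left right by (intro divide_right_mono add_mono) simp_all
  also have "\<dots> = gauss_erf v - gauss_erf (q * v)"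
    unfolding gauss_erf_def by (simp add: field_simps)
  finally show ?thesis .
qed

lemma gauss_erf_shift_std_normal_eq:
  "gauss_erf (u - t * g) * std_normal_density g
     = (gauss_tail (- u - (- t) * g) * std_normal_density g - gauss_tail (u - t * g) * std_normal_density g) / 2"
  unfolding gauss_erf_def by (simp add: algebra_simps diff_divide_distrib)

lemma integrable_gauss_erf_shift_std_normal:
  "integrable lborel (\<lambda>g. gauss_erf (u - t * g) * std_normal_density g)"
  unfolding gauss_erf_shift_std_normal_eq
  by (intro integrable_divide Bochner_Integration.integrable_diff integrable_gauss_tail_shift_std_normal)

lemma integral_gauss_erf_shift_std_normal:
  assumes "t \<noteq> 0"
  shows "(\<integral>g. gauss_erf (u - t * g) * std_normal_density g \<partial>lborel) = gauss_erf (u / sqrt (1 + t\<^sup>2))"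
proof -
  have i1: "integrable lborel (\<lambda>g. gauss_tail (- u - (- t) * g) * std_normal_density g)"
    and i2: "integrable lborel (\<lambda>g. gauss_tail (u - t * g) * std_normal_density g)"
    by (rule integrable_gauss_tail_shift_std_normal)+
  have "(\<integral>g. gauss_tail (- u - (- t) * g) * std_normal_density g \<partial>lborel) = gauss_tail (- u / sqrt (1 + (- t)\<^sup>2))"
    and "(\<integral>g. gauss_tail (u - t * g) * std_normal_density g \<partial>lborel) = gauss_tail (u / sqrt (1 + t\<^sup>2))"
    using assms by (intro integral_gauss_tail_shift_std_normal; simp)+
  then show ?thesis
    unfolding gauss_erf_shift_std_normal_eq integral_divide_zero Bochner_Integration.integral_diff[OF i1 i2]
    by (simp add: gauss_erf_def)
qed

section \<open>The kernel\<close>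

lemma phi_pos: "0 < phi t"
  unfolding phi_eq_std_normal_density by (simp add: normal_density_pos)

lemma borel_measurable_phi [measurable]: "phi \<in> borel_measurable borel"
  unfolding phi_eq_std_normal_density[abs_def] by simp

lemma integrable_phi: "integrable lborel phi"
  unfolding phi_eq_std_normal_density[abs_def] by simp

lemma nn_integral_phi: "(\<integral>\<^sup>+g. ennreal (phi g) \<partial>lborel) = 1"
  unfolding phi_eq_std_normal_density by (subst nn_integral_eq_integral) auto

lemma phi_antimono_abs: "\<bar>x\<bar> \<le> \<bar>y\<bar> \<Longrightarrow> phi y \<le> phi x"
  unfolding phi_eq_std_normal_density std_normal_density_def
  by (intro mult_left_mono) (auto simp: abs_le_square_iff)

lemma pbar_nonneg: "0 < s \<Longrightarrow> 0 \<le> pbar s x g"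
  unfolding pbar_def phi_var_def by simp

lemma pbar_le_1: "pbar s x g \<le> 1"
  unfolding pbar_def by simp

lemma borel_measurable_pbar [measurable (raw)]:
  assumes [measurable]: "f \<in> borel_measurable M" "g \<in> borel_measurable M"
  shows "(\<lambda>y. pbar s (f y) (g y)) \<in> borel_measurable M"
  unfolding pbar_def phi_var_def by measurable

lemma pbar_mult_phi:
  assumes s: "0 < s"
  shows "pbar s x g * phi g = min (phi g) (phi (x / sqrt s - g))"
proof -
  have e1: "(x - sqrt s * g)\<^sup>2 / (2 * s) = (x / sqrt s - g)\<^sup>2 / 2"
    and e2: "(sqrt s * g)\<^sup>2 / (2 * s) = g\<^sup>2 / 2"
    using s by (simp_all add: field_simps power2_eq_square real_sqrt_mult[symmetric])
  have "phi_var s (x - sqrt s * g) / phi_var s (sqrt s * g) = phi (x / sqrt s - g) / phi g"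
    unfolding phi_def phi_var_def using s by (simp add: e1 e2)
  then show ?thesis
    unfolding pbar_def using phi_pos[of g] by (simp add: min_mult_distrib_right)
qed

lemma pbar_eq_1:
  assumes s: "0 < s" and x: "0 \<le> x" and g: "x - 2 * sqrt s * g \<le> 0"
  shows "pbar s x g = 1"
proof -
  have "x / sqrt s \<le> 2 * g" "0 \<le> x / sqrt s"
    using s x g by (simp_all add: field_simps)
  then have "\<bar>x / sqrt s - g\<bar> \<le> \<bar>g\<bar>"
    by linarith
  then have "phi g \<le> phi (x / sqrt s - g)"
    by (rule phi_antimono_abs)
  then have "phi g \<le> pbar s x g * phi g"
    unfolding pbar_mult_phi[OF s] by simp
  then have "1 \<le> pbar s x g"
    using phi_pos[of g] by (simp add: mult_le_cancel_right1)
  then show ?thesis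
    using pbar_le_1[of s x g] by linarith
qed

text \<open>\<open>Qker_nn_integral s f x\<close> is \<open>\<integral> f dQ\<^sub>\<gamma>(w, \<cdot>)\<close> for \<open>s = \<sigma>\<^sup>2 \<gamma>\<close> and \<open>x = \<tau>\<^sub>\<gamma>(w) + \<gamma> c\<^sub>\<infinity>\<close>:
  the chain jumps to \<open>0\<close> with probability \<open>pbar\<close>, and otherwise moves to \<open>x - 2 \<surd>s g\<close>.\<close>
definition Qker_nn_integral :: "real \<Rightarrow> (real \<Rightarrow> ennreal) \<Rightarrow> real \<Rightarrow> ennreal" where
  "Qker_nn_integral s f x =
     f 0 * (\<integral>\<^sup>+g. ennreal (pbar s x g * phi g) \<partial>lborel)
     + (\<integral>\<^sup>+g. f (x - 2 * sqrt s * g) * ennreal ((1 - pbar s x g) * phi g) \<partial>lborel)"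

lemma Qker_eq_Qker_nn_integral:
  assumes \<sigma>: "0 < \<sigma>" and \<gamma>: "0 < \<gamma>" and A [measurable]: "A \<in> sets borel"
  shows "ennreal (Qker \<sigma> c \<tau> \<gamma> w A) = Qker_nn_integral (\<sigma>\<^sup>2 * \<gamma>) (indicator A) (\<tau> \<gamma> w + \<gamma> * c)"
proof -
  define s where "s = \<sigma>\<^sup>2 * \<gamma>"
  define x where "x = \<tau> \<gamma> w + \<gamma> * c"
  have s: "0 < s"
    unfolding s_def using \<sigma> \<gamma> by simp
  have sqrt_s: "2 * \<sigma> * sqrt \<gamma> = 2 * sqrt s"
    unfolding s_def using \<sigma> \<gamma> by (simp add: real_sqrt_mult)
  define p where "p g = pbar s x g * phi g" for g
  define q where "q g = indicator A (x - 2 * sqrt s * g) * (1 - pbar s x g) * phi g" for g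
  have p: "0 \<le> p g" and q: "0 \<le> q g" for g
    unfolding p_def q_def using pbar_nonneg[OF s] pbar_le_1 phi_pos by (simp_all add: less_imp_le)
  have "integrable lborel p" "integrable lborel q"
    unfolding p_def q_def
    using pbar_nonneg[OF s] pbar_le_1 phi_pos
    by (auto intro!: Bochner_Integration.integrable_bound[OF integrable_phi] AE_I2
        simp: abs_mult less_imp_le mult_left_le_one_le indicator_def)
  then have "ennreal (integral\<^sup>L lborel p) = (\<integral>\<^sup>+g. ennreal (p g) \<partial>lborel)"
    and "ennreal (integral\<^sup>L lborel q) = (\<integral>\<^sup>+g. ennreal (q g) \<partial>lborel)"
    using p q by (simp_all add: nn_integral_eq_integral)
  moreover have "0 \<le> integral\<^sup>L lborel p" "0 \<le> integral\<^sup>L lborel q"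
    using p q by (simp_all add: integral_nonneg_AE)
  moreover have "(\<integral>\<^sup>+g. ennreal (q g) \<partial>lborel)
      = (\<integral>\<^sup>+g. indicator A (x - 2 * sqrt s * g) * ennreal ((1 - pbar s x g) * phi g) \<partial>lborel)"
    unfolding q_def by (intro nn_integral_cong) (auto simp: indicator_def)
  ultimately show ?thesis
    unfolding Qker_def Qker_nn_integral_def sqrt_s s_def[symmetric] x_def[symmetric]
      p_def[symmetric] q_def[symmetric]
    by (simp add: ennreal_plus ennreal_mult' indicator_def)
qed

lemma borel_measurable_Qker_nn_integral [measurable]:
  assumes [measurable]: "f \<in> borel_measurable borel"
  shows "Qker_nn_integral s f \<in> borel_measurable borel"
  unfolding Qker_nn_integral_def[abs_def] by measurable

lemma Qker_nn_integral_mono: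
  "(\<And>y. f y \<le> h y) \<Longrightarrow> Qker_nn_integral s f x \<le> Qker_nn_integral s h x"
  unfolding Qker_nn_integral_def by (intro add_mono mult_right_mono nn_integral_mono) auto

lemma Qker_nn_integral_cmult:
  assumes [measurable]: "f \<in> borel_measurable borel"
  shows "Qker_nn_integral s (\<lambda>y. c * f y) x = c * Qker_nn_integral s f x"
proof -
  have "(\<integral>\<^sup>+g. c * f (x - 2 * sqrt s * g) * ennreal ((1 - pbar s x g) * phi g) \<partial>lborel)
      = c * (\<integral>\<^sup>+g. f (x - 2 * sqrt s * g) * ennreal ((1 - pbar s x g) * phi g) \<partial>lborel)"
    by (simp only: mult.assoc, rule nn_integral_cmult) measurable
  then show ?thesis
    unfolding Qker_nn_integral_def by (simp add: distrib_left mult.assoc)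
qed

lemma Qker_nn_integral_add:
  assumes [measurable]: "f \<in> borel_measurable borel" "h \<in> borel_measurable borel"
  shows "Qker_nn_integral s (\<lambda>y. f y + h y) x = Qker_nn_integral s f x + Qker_nn_integral s h x"
proof -
  have "(\<integral>\<^sup>+g. (f (x - 2 * sqrt s * g) + h (x - 2 * sqrt s * g)) * ennreal ((1 - pbar s x g) * phi g) \<partial>lborel)
      = (\<integral>\<^sup>+g. f (x - 2 * sqrt s * g) * ennreal ((1 - pbar s x g) * phi g) \<partial>lborel)
        + (\<integral>\<^sup>+g. h (x - 2 * sqrt s * g) * ennreal ((1 - pbar s x g) * phi g) \<partial>lborel)"
    unfolding distrib_right by (rule nn_integral_add) measurable
  then show ?thesis
    unfolding Qker_nn_integral_def by (simp add: distrib_right algebra_simps)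
qed

lemma Qker_nn_integral_SUP:
  assumes [measurable]: "\<And>i. f i \<in> borel_measurable borel" and inc: "incseq f"
  shows "Qker_nn_integral s (SUP i. f i) x = (SUP i. Qker_nn_integral s (f i) x)"
proof -
  have inc_int: "incseq (\<lambda>i g. f i (x - 2 * sqrt s * g) * ennreal ((1 - pbar s x g) * phi g))"
    using inc by (auto simp: incseq_def le_fun_def intro!: mult_right_mono)
  have "(\<integral>\<^sup>+g. (SUP i. f i) (x - 2 * sqrt s * g) * ennreal ((1 - pbar s x g) * phi g) \<partial>lborel)
      = (\<integral>\<^sup>+g. (SUP i. f i (x - 2 * sqrt s * g) * ennreal ((1 - pbar s x g) * phi g)) \<partial>lborel)"
    by (simp only: SUP_apply SUP_mult_right_ennreal)
  also have "\<dots> = (SUP i. \<integral>\<^sup>+g. f i (x - 2 * sqrt s * g) * ennreal ((1 - pbar s x g) * phi g) \<partial>lborel)"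
    by (rule nn_integral_monotone_convergence_SUP[OF inc_int]) measurable
  finally have jump: "(\<integral>\<^sup>+g. (SUP i. f i) (x - 2 * sqrt s * g) * ennreal ((1 - pbar s x g) * phi g) \<partial>lborel)
      = (SUP i. \<integral>\<^sup>+g. f i (x - 2 * sqrt s * g) * ennreal ((1 - pbar s x g) * phi g) \<partial>lborel)" .
  have "incseq (\<lambda>i. f i 0 * (\<integral>\<^sup>+g. ennreal (pbar s x g * phi g) \<partial>lborel))"
    using inc by (auto simp: incseq_def le_fun_def intro!: mult_right_mono)
  moreover have "incseq (\<lambda>i. \<integral>\<^sup>+g. f i (x - 2 * sqrt s * g) * ennreal ((1 - pbar s x g) * phi g) \<partial>lborel)"
    using inc_int by (auto simp: incseq_def le_fun_def intro!: nn_integral_mono)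
  ultimately show ?thesis
    unfolding Qker_nn_integral_def jump unfolding SUP_apply SUP_mult_right_ennreal
    by (rule ennreal_SUP_add[symmetric])
qed

lemma Qker_nn_integral_le_const:
  assumes s: "0 < s" and f: "\<And>y. f y \<le> k"
  shows "Qker_nn_integral s f x \<le> k"
proof -
  have "Qker_nn_integral s f x
      \<le> k * (\<integral>\<^sup>+g. ennreal (pbar s x g * phi g) \<partial>lborel) + (\<integral>\<^sup>+g. k * ennreal ((1 - pbar s x g) * phi g) \<partial>lborel)"
    unfolding Qker_nn_integral_def using f by (intro add_mono mult_right_mono nn_integral_mono) auto
  also have "\<dots> = k * ((\<integral>\<^sup>+g. ennreal (pbar s x g * phi g) \<partial>lborel) + (\<integral>\<^sup>+g. ennreal ((1 - pbar s x g) * phi g) \<partial>lborel))"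
    by (simp add: nn_integral_cmult distrib_left)
  also have "(\<integral>\<^sup>+g. ennreal (pbar s x g * phi g) \<partial>lborel) + (\<integral>\<^sup>+g. ennreal ((1 - pbar s x g) * phi g) \<partial>lborel)
      = (\<integral>\<^sup>+g. ennreal (phi g) \<partial>lborel)"
    using pbar_nonneg[OF s] pbar_le_1 phi_pos
    by (subst nn_integral_add[symmetric])
       (auto intro!: nn_integral_cong simp: ennreal_plus[symmetric] less_imp_le algebra_simps simp del: ennreal_plus)
  finally show ?thesis
    by (simp add: nn_integral_phi)
qed

text \<open>The substitution \<open>g \<mapsto> x / \<surd>s - g\<close> swaps the two arguments of the minimum in
  \<open>pbar_mult_phi\<close> and maps the proposal \<open>x - 2 \<surd>s g\<close> to its negative.\<close>
lemma integral_odd_mult_pbar_phi: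
  assumes s: "0 < s" and odd: "\<And>y. F (- y) = - F y"
  shows "(\<integral>g. F (x - 2 * sqrt s * g) * (pbar s x g * phi g) \<partial>lborel) = 0"
proof -
  define h where "h = sqrt s"
  have h: "0 < h"
    unfolding h_def using s by simp
  define G where "G g = F (x - 2 * h * g) * min (phi g) (phi (x / h - g))" for g
  have G_reflect: "G (x / h + (- 1) * g) = - G g" for g
  proof -
    have e1: "x - 2 * h * (x / h + (- 1) * g) = - (x - 2 * h * g)"
      using h by (simp add: field_simps)
    have e2: "x / h - (x / h + (- 1) * g) = g"
      by simp
    show ?thesis
      unfolding G_def e1 e2 odd by (simp add: min.commute)
  qed
  have "(\<integral>g. G g \<partial>lborel) = \<bar>- 1\<bar> *\<^sub>R (\<integral>g. G (x / h + (- 1) * g) \<partial>lborel)"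
    by (rule lborel_integral_real_affine) simp
  then have "(\<integral>g. G g \<partial>lborel) = 0"
    unfolding G_reflect by simp
  then show ?thesis
    unfolding pbar_mult_phi[OF s] G_def h_def .
qed

lemma Qker_nn_integral_odd:
  assumes s: "0 < s" and x: "0 \<le> x"
    and odd: "\<And>y. F (- y) = - F y" and nonneg: "\<And>y. 0 \<le> y \<Longrightarrow> 0 \<le> F y"
    and [measurable]: "F \<in> borel_measurable borel"
    and int: "integrable lborel (\<lambda>g. F (x - 2 * sqrt s * g) * phi g)"
  shows "Qker_nn_integral s (\<lambda>y. ennreal (F y)) x = ennreal (\<integral>g. F (x - 2 * sqrt s * g) * phi g \<partial>lborel)"
proof -
  define J where "J g = F (x - 2 * sqrt s * g) * ((1 - pbar s x g) * phi g)" for g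
  have J: "ennreal (F (x - 2 * sqrt s * g)) * ennreal ((1 - pbar s x g) * phi g) = ennreal (J g) \<and> 0 \<le> J g" for g
  proof (cases "0 \<le> x - 2 * sqrt s * g")
    case True
    then have "0 \<le> F (x - 2 * sqrt s * g)" "0 \<le> (1 - pbar s x g) * phi g"
      using nonneg pbar_le_1[of s x g] phi_pos[of g] by (simp_all add: less_imp_le)
    then show ?thesis
      unfolding J_def by (simp add: ennreal_mult)
  next
    case False
    then show ?thesis
      unfolding J_def using pbar_eq_1[OF s x] by simp
  qed
  then have J_eq: "ennreal (F (x - 2 * sqrt s * g)) * ennreal ((1 - pbar s x g) * phi g) = ennreal (J g)"
    and J_nonneg: "0 \<le> J g" for g
    by simp_all
  have bounded: "integrable lborel (\<lambda>g. F (x - 2 * sqrt s * g) * (p g * phi g))"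
    if "\<And>g. 0 \<le> p g" "\<And>g. p g \<le> 1" and [measurable]: "p \<in> borel_measurable borel" for p
    using that phi_pos
    by (intro Bochner_Integration.integrable_bound[OF int])
       (auto intro!: AE_I2 mult_left_mono simp: abs_mult less_imp_le mult_left_le_one_le)
  have F0: "F 0 = 0"
    using odd[of 0] by simp
  have "Qker_nn_integral s (\<lambda>y. ennreal (F y)) x = (\<integral>\<^sup>+g. ennreal (J g) \<partial>lborel)"
    unfolding Qker_nn_integral_def F0 J_eq by simp
  also have "\<dots> = ennreal (\<integral>g. J g \<partial>lborel)"
    unfolding J_def using J_nonneg pbar_nonneg[OF s] pbar_le_1
    by (subst nn_integral_eq_integral) (auto intro!: bounded simp: J_def)
  also have "(\<integral>g. J g \<partial>lborel)
      = (\<integral>g. F (x - 2 * sqrt s * g) * phi g - F (x - 2 * sqrt s * g) * (pbar s x g * phi g) \<partial>lborel)"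
    unfolding J_def by (simp add: algebra_simps)
  also have "\<dots> = (\<integral>g. F (x - 2 * sqrt s * g) * phi g \<partial>lborel)"
    using int bounded[of "pbar s x"] pbar_nonneg[OF s] pbar_le_1 integral_odd_mult_pbar_phi[of s F x, OF s odd]
    by simp
  finally show ?thesis .
qed

lemma nn_integral_invariant_Qker_nn_integral:
  fixes \<mu> :: "real measure"
  assumes sets [measurable_cong]: "sets \<mu> = sets borel"
    and X [measurable]: "X \<in> borel_measurable borel"
    and inv: "\<And>A. A \<in> sets borel \<Longrightarrow> emeasure \<mu> A = (\<integral>\<^sup>+w. Qker_nn_integral s (indicator A) (X w) \<partial>\<mu>)"
    and f: "f \<in> borel_measurable borel"
  shows "(\<integral>\<^sup>+w. f w \<partial>\<mu>) = (\<integral>\<^sup>+w. Qker_nn_integral s f (X w) \<partial>\<mu>)"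
  using f
proof (induct rule: borel_measurable_induct)
  case (cong f g)
  then show ?case
    by (simp add: fun_eq_iff)
next
  case (set A)
  then show ?case
    using inv[OF set] sets by simp
next
  case (mult u c)
  note [measurable] = mult(2)
  show ?case
    by (simp add: Qker_nn_integral_cmult nn_integral_cmult mult(4))
next
  case (add u v)
  note [measurable] = add(1) add(4)
  show ?case
    by (simp add: Qker_nn_integral_add nn_integral_add add(3) add(7))
next
  case (seq U)
  note [measurable] = seq(1)
  have "(\<integral>\<^sup>+w. (SUP i. U i) w \<partial>\<mu>) = (SUP i. \<integral>\<^sup>+w. U i w \<partial>\<mu>)"
    unfolding SUP_apply by (rule nn_integral_monotone_convergence_SUP[OF seq(4)]) measurable
  also have "\<dots> = (SUP i. \<integral>\<^sup>+w. Qker_nn_integral s (U i) (X w) \<partial>\<mu>)"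
    using seq(3) by simp
  also have "\<dots> = (\<integral>\<^sup>+w. (SUP i. Qker_nn_integral s (U i) (X w)) \<partial>\<mu>)"
    using seq(4)
    by (intro nn_integral_monotone_convergence_SUP[symmetric])
       (auto simp: incseq_def le_fun_def intro!: Qker_nn_integral_mono)
  also have "\<dots> = (\<integral>\<^sup>+w. Qker_nn_integral s (SUP i. U i) (X w) \<partial>\<mu>)"
    using seq(4) by (simp add: Qker_nn_integral_SUP)
  finally show ?case .
qed

section \<open>A Foster--Lyapunov bound\<close>

lemma min_add_le_ennreal: "min (a + b) r \<le> min a r + (b :: ennreal)"
proof (cases "a \<le> r")
  case True
  then show ?thesis
    by (simp add: min_absorb1 min.coboundedI1)
next
  case False
  then show ?thesis
    by (simp add: min_absorb2 min.coboundedI2 add_increasing2)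
qed

lemma INF_power_mult_ennreal:
  assumes "0 \<le> \<rho>" "\<rho> < 1" "v < top"
  shows "(INF n. ennreal (\<rho> ^ n) * v) = 0"
proof -
  obtain u where v: "v = ennreal u" "0 \<le> u"
    using assms(3) by (cases v) auto
  have "(\<lambda>n. ennreal (\<rho> ^ n * u)) \<longlonglongrightarrow> ennreal (0 * u)"
    using assms by (intro tendsto_ennrealI tendsto_mult_right LIMSEQ_power_zero) auto
  moreover have "decseq (\<lambda>n. ennreal (\<rho> ^ n * u))"
    using assms v by (auto simp: decseq_def intro!: ennreal_leI mult_right_mono power_decreasing)
  ultimately have "(INF n. ennreal (\<rho> ^ n * u)) = 0"
    using LIMSEQ_INF LIMSEQ_unique by fastforce
  then show ?thesis
    using assms v by (simp add: ennreal_mult)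
qed

lemma telescope_le_ennreal:
  fixes G b :: "nat \<Rightarrow> ennreal"
  assumes "\<And>n. G n \<le> G (Suc n) + b n"
  shows "G 0 \<le> G n + (\<Sum>i<n. b i)"
proof (induction n)
  case (Suc n)
  then have "G 0 \<le> G (Suc n) + b n + (\<Sum>i<n. b i)"
    using assms[of n] by (meson add_right_mono order_trans)
  then show ?case
    by (simp add: ac_simps)
qed simp

lemma sum_geometric_ennreal_le:
  assumes \<rho>: "0 \<le> \<rho>" "\<rho> < 1" and B: "0 \<le> B"
  shows "(\<Sum>i<n. ennreal (B * \<rho> ^ i)) \<le> ennreal (B / (1 - \<rho>))"
proof -
  have "(\<Sum>i<n. B * \<rho> ^ i) = B * ((1 - \<rho> ^ n) / (1 - \<rho>))"
    using \<rho> by (simp add: sum_distrib_left[symmetric] sum_gp_strict)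
  also have "\<dots> \<le> B * (1 / (1 - \<rho>))"
    using \<rho> B by (intro mult_left_mono divide_right_mono) auto
  finally have "(\<Sum>i<n. B * \<rho> ^ i) \<le> B / (1 - \<rho>)"
    by simp
  moreover have "(\<Sum>i<n. ennreal (B * \<rho> ^ i)) = ennreal (\<Sum>i<n. B * \<rho> ^ i)"
    using \<rho> B by (intro sum_ennreal) auto
  ultimately show ?thesis
    by (simp add: ennreal_leI)
qed

text \<open>The drift is iterated on the truncations \<open>min (\<rho>\<^sup>n V) r\<close>, which are bounded, so no
  integrability of \<open>V\<close> has to be assumed.\<close>
context
  fixes \<mu> :: "'a measure" and P :: "('a \<Rightarrow> ennreal) \<Rightarrow> 'a \<Rightarrow> ennreal" and V :: "'a \<Rightarrow> ennreal"
    and \<rho> B :: real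
  assumes prob: "prob_space \<mu>"
    and inv: "\<And>f. f \<in> borel_measurable \<mu> \<Longrightarrow> (\<integral>\<^sup>+x. f x \<partial>\<mu>) = (\<integral>\<^sup>+x. P f x \<partial>\<mu>)"
    and mono: "\<And>f h x. (\<And>y. f y \<le> h y) \<Longrightarrow> P f x \<le> P h x"
    and cmult: "\<And>f c x. f \<in> borel_measurable \<mu> \<Longrightarrow> P (\<lambda>y. c * f y) x = c * P f x"
    and markov: "\<And>f k x. (\<And>y. f y \<le> k) \<Longrightarrow> P f x \<le> k"
    and V [measurable]: "V \<in> borel_measurable \<mu>" and V_finite: "AE x in \<mu>. V x < top"
    and drift: "AE x in \<mu>. P V x \<le> ennreal \<rho> * V x + ennreal B"
    and \<rho>: "0 \<le> \<rho>" "\<rho> < 1" and B: "0 \<le> B"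
begin

lemma nn_integral_truncation_drift_step:
  "(\<integral>\<^sup>+x. min (ennreal (\<rho> ^ n) * V x) r \<partial>\<mu>)
     \<le> (\<integral>\<^sup>+x. min (ennreal (\<rho> ^ Suc n) * V x) r \<partial>\<mu>) + ennreal (B * \<rho> ^ n)"
proof -
  interpret prob_space \<mu> by (rule prob)
  have "P (\<lambda>y. min (ennreal (\<rho> ^ n) * V y) r) x
      \<le> min (ennreal (\<rho> ^ Suc n) * V x) r + ennreal (B * \<rho> ^ n)"
    if "P V x \<le> ennreal \<rho> * V x + ennreal B" for x
  proof -
    have "P (\<lambda>y. min (ennreal (\<rho> ^ n) * V y) r) x \<le> ennreal (\<rho> ^ n) * P V x"
      unfolding cmult[OF V, symmetric] by (rule mono) simp
    also have "\<dots> \<le> ennreal (\<rho> ^ n) * (ennreal \<rho> * V x + ennreal B)"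
      using that by (rule mult_left_mono) simp
    also have "\<dots> = ennreal (\<rho> ^ Suc n) * V x + ennreal (B * \<rho> ^ n)"
    proof -
      have "ennreal (\<rho> ^ Suc n) = ennreal (\<rho> ^ n) * ennreal \<rho>"
        and "ennreal (B * \<rho> ^ n) = ennreal (\<rho> ^ n) * ennreal B"
        using \<rho> B by (simp_all add: ennreal_mult[symmetric] mult.commute)
      then show ?thesis
        by (simp add: distrib_left mult.assoc)
    qed
    finally have "P (\<lambda>y. min (ennreal (\<rho> ^ n) * V y) r) x
        \<le> min (ennreal (\<rho> ^ Suc n) * V x + ennreal (B * \<rho> ^ n)) r"
      using markov[of "\<lambda>y. min (ennreal (\<rho> ^ n) * V y) r" r] by simp
    then show ?thesis
      using min_add_le_ennreal order_trans by blast
  qed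
  moreover have "(\<lambda>x. min (ennreal (\<rho> ^ n) * V x) r) \<in> borel_measurable \<mu>"
    by measurable
  ultimately have "(\<integral>\<^sup>+x. min (ennreal (\<rho> ^ n) * V x) r \<partial>\<mu>)
      \<le> (\<integral>\<^sup>+x. min (ennreal (\<rho> ^ Suc n) * V x) r + ennreal (B * \<rho> ^ n) \<partial>\<mu>)"
    using drift by (subst inv) (auto intro: nn_integral_mono_AE)
  then show ?thesis
    by (simp add: nn_integral_add emeasure_space_1)
qed

lemma nn_integral_truncation_vanishes:
  assumes r: "r < top"
  shows "(INF n. \<integral>\<^sup>+x. min (ennreal (\<rho> ^ n) * V x) r \<partial>\<mu>) = 0"
proof -
  interpret prob_space \<mu> by (rule prob)
  have "decseq (\<lambda>n x. min (ennreal (\<rho> ^ n) * V x) r)"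
  proof (rule decseq_SucI, rule le_funI)
    fix n x
    have "ennreal (\<rho> ^ Suc n) \<le> ennreal (\<rho> ^ n)"
      using \<rho> by (intro ennreal_leI power_decreasing) auto
    then show "min (ennreal (\<rho> ^ Suc n) * V x) r \<le> min (ennreal (\<rho> ^ n) * V x) r"
      by (intro min.mono mult_right_mono) auto
  qed
  moreover have "(\<integral>\<^sup>+x. min (ennreal (\<rho> ^ n) * V x) r \<partial>\<mu>) < top" for n
  proof -
    have "(\<integral>\<^sup>+x. min (ennreal (\<rho> ^ n) * V x) r \<partial>\<mu>) \<le> (\<integral>\<^sup>+x. r \<partial>\<mu>)"
      by (intro nn_integral_mono) simp
    also have "\<dots> = r"
      by (simp add: emeasure_space_1)
    finally show ?thesis
      using r by (rule le_less_trans)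
  qed
  ultimately have "(INF n. \<integral>\<^sup>+x. min (ennreal (\<rho> ^ n) * V x) r \<partial>\<mu>)
      = (\<integral>\<^sup>+x. (INF n. min (ennreal (\<rho> ^ n) * V x) r) \<partial>\<mu>)"
    by (intro nn_integral_monotone_convergence_INF_decseq[symmetric]) auto
  also have "\<dots> = (\<integral>\<^sup>+x. 0 \<partial>\<mu>)"
  proof (intro nn_integral_cong_AE)
    show "AE x in \<mu>. (INF n. min (ennreal (\<rho> ^ n) * V x) r) = 0"
      using V_finite
    proof eventually_elim
      case (elim x)
      have "(INF n. min (ennreal (\<rho> ^ n) * V x) r) \<le> (INF n. ennreal (\<rho> ^ n) * V x)"
        by (intro INF_mono') simp
      then show ?case
        using INF_power_mult_ennreal[OF \<rho> elim] by simp
    qed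
  qed
  finally show ?thesis
    by simp
qed

lemma nn_integral_truncation_le:
  assumes r: "r < top"
  shows "(\<integral>\<^sup>+x. min (V x) r \<partial>\<mu>) \<le> ennreal (B / (1 - \<rho>))"
proof -
  define G where "G n = (\<integral>\<^sup>+x. min (ennreal (\<rho> ^ n) * V x) r \<partial>\<mu>)" for n
  have "G 0 \<le> G n + ennreal (B / (1 - \<rho>))" for n
    using telescope_le_ennreal[of G, OF nn_integral_truncation_drift_step[where r = r, folded G_def], of n]
      sum_geometric_ennreal_le[OF \<rho> B, of n]
    by (meson add_left_mono order_trans)
  then have "G 0 \<le> (INF n. G n + ennreal (B / (1 - \<rho>)))"
    by (rule INF_greatest)
  also have "\<dots> = (INF n. G n) + ennreal (B / (1 - \<rho>))"
    by (rule INF_ennreal_add_const)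
  finally show ?thesis
    using nn_integral_truncation_vanishes[OF r] unfolding G_def by simp
qed

lemma invariant_nn_integral_le_drift: "(\<integral>\<^sup>+x. V x \<partial>\<mu>) \<le> ennreal (B / (1 - \<rho>))"
proof -
  have "V x = (SUP k::nat. min (V x) (of_nat k))" for x
  proof -
    have "V x = min (V x) (SUP k::nat. of_nat k)"
      by (simp add: ennreal_SUP_of_nat_eq_top)
    then show ?thesis
      by (simp add: inf_min[symmetric] inf_SUP)
  qed
  then have "(\<integral>\<^sup>+x. V x \<partial>\<mu>) = (\<integral>\<^sup>+x. (SUP k::nat. min (V x) (of_nat k)) \<partial>\<mu>)"
    by simp
  also have "\<dots> = (SUP k::nat. \<integral>\<^sup>+x. min (V x) (of_nat k) \<partial>\<mu>)"
    by (rule nn_integral_monotone_convergence_SUP) (auto simp: incseq_def le_fun_def min.coboundedI2)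
  also have "\<dots> \<le> ennreal (B / (1 - \<rho>))"
    by (intro SUP_least nn_integral_truncation_le) (simp add: of_nat_less_top)
  finally show ?thesis .
qed

end

section \<open>The drift inequality\<close>

lemma sinh_diff_bounds:
  fixes x y :: real
  assumes "0 \<le> x" "x \<le> y"
  shows "(y - x) * cosh x \<le> sinh y - sinh x" and "sinh y - sinh x \<le> (y - x) * cosh y"
proof -
  have "(y - x) * cosh x \<le> sinh y - sinh x \<and> sinh y - sinh x \<le> (y - x) * cosh y"
  proof (cases "x = y")
    case False
    then have xy: "x < y"
      using assms by simp
    have "(sinh has_real_derivative cosh u) (at u)" for u :: real
      using has_field_derivative_sinh[of "\<lambda>u. u" 1] by simp
    then obtain z where z: "x < z" "z < y" "sinh y - sinh x = (y - x) * cosh z"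
      using MVT2[OF xy, of sinh cosh] by blast
    have "cosh x \<le> cosh z" "cosh z \<le> cosh y"
      using z assms by (simp_all add: cosh_real_nonneg_le_iff)
    then show ?thesis
      using z xy by (auto intro: mult_left_mono)
  qed simp
  then show "(y - x) * cosh x \<le> sinh y - sinh x" "sinh y - sinh x \<le> (y - x) * cosh y"
    by auto
qed

lemma sinh_le_mult_cosh: "0 \<le> x \<Longrightarrow> sinh x \<le> x * cosh (x :: real)"
  using sinh_diff_bounds(2)[of 0 x] by simp

lemma le_sinh: "0 \<le> x \<Longrightarrow> x \<le> sinh (x :: real)"
  using sinh_diff_bounds(1)[of 0 x] cosh_real_ge_1[of 0] by simp

lemma exp_mult_sinh_le_sinh_add:
  fixes t e :: real
  assumes "0 \<le> t" "0 \<le> e"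
  shows "exp e * sinh t \<le> sinh (t + e)"
proof -
  have "exp e * sinh t = sinh t * cosh e + sinh t * sinh e"
    by (simp add: cosh_plus_sinh[symmetric] algebra_simps)
  also have "\<dots> \<le> sinh t * cosh e + cosh t * sinh e"
    using assms sinh_le_cosh_real[of t] by (intro add_left_mono mult_right_mono) auto
  finally show ?thesis
    by (simp add: sinh_add)
qed

lemma sinh_mult_le:
  fixes q t :: real
  assumes "0 \<le> q" "q \<le> 1" "0 \<le> t"
  shows "sinh (q * t) \<le> q * sinh t"
proof -
  have qt: "0 \<le> q * t" "q * t \<le> t"
    using assms by (auto simp: mult_left_le_one_le)
  have "(1 - q) * sinh (q * t) \<le> (1 - q) * (q * t * cosh (q * t))"
    using sinh_le_mult_cosh[OF qt(1)] assms by (intro mult_left_mono) auto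
  also have "\<dots> = q * ((t - q * t) * cosh (q * t))"
    by (simp add: algebra_simps)
  also have "\<dots> \<le> q * (sinh t - sinh (q * t))"
    using sinh_diff_bounds(1)[OF qt] assms by (intro mult_left_mono) auto
  finally show ?thesis
    by (simp add: algebra_simps)
qed

lemma exp_minus_1_le_2_sinh: "0 \<le> x \<Longrightarrow> exp x - 1 \<le> 2 * sinh (x :: real)"
  unfolding sinh_def by (simp add: field_simps)

lemma growth_le_smoothing_factor:
  fixes \<gamma> L :: real
  assumes \<gamma>: "0 < \<gamma>" and L: "0 \<le> L" and small: "\<gamma> * (L + 1) \<le> 1 / 2"
  shows "1 + \<gamma> * L \<le> (1 - \<gamma> / 4) * sqrt (1 + 4 * \<gamma> * (L + 1))"
proof -
  define p where "p = \<gamma> * L"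
  have p: "0 \<le> p" "p + \<gamma> \<le> 1 / 2"
    unfolding p_def using \<gamma> L small by (simp_all add: algebra_simps)
  have "p * p \<le> p / 2"
    using p \<gamma> by (intro order_trans[OF mult_left_mono[of p "1 / 2" p]]) auto
  moreover have "p * \<gamma> \<le> \<gamma> / 2"
    using p \<gamma> by (intro order_trans[OF mult_right_mono[of p "1 / 2" \<gamma>]]) auto
  moreover have "\<gamma> * \<gamma> \<le> \<gamma> / 2"
    using p \<gamma> by (intro order_trans[OF mult_right_mono[of \<gamma> "1 / 2" \<gamma>]]) auto
  moreover have "0 \<le> \<gamma> * \<gamma> * \<gamma>" "0 \<le> p * \<gamma> * \<gamma>"
    using \<gamma> p by simp_all
  \<comment> \<open>After squaring, the negative terms of the difference are dominated using \<open>p + \<gamma> \<le> 1 / 2\<close>.\<close>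
  moreover have "(1 - \<gamma> / 4)\<^sup>2 * (1 + 4 * \<gamma> + 4 * p) - (1 + p)\<^sup>2
      = 2 * p + 7 / 2 * \<gamma> - p * p - 2 * (p * \<gamma>) - 31 / 16 * (\<gamma> * \<gamma>) + (\<gamma> * \<gamma> * \<gamma>) / 4 + (p * \<gamma> * \<gamma>) / 4"
    by (simp add: power2_eq_square algebra_simps)
  ultimately have "(1 + p)\<^sup>2 \<le> (1 - \<gamma> / 4)\<^sup>2 * (1 + 4 * \<gamma> + 4 * p)"
    using p \<gamma> by linarith
  also have "1 + 4 * \<gamma> + 4 * p = 1 + 4 * \<gamma> * (L + 1)"
    unfolding p_def by (simp add: algebra_simps)
  finally have "(1 + \<gamma> * L)\<^sup>2 \<le> ((1 - \<gamma> / 4) * sqrt (1 + 4 * \<gamma> * (L + 1)))\<^sup>2"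
    unfolding p_def using \<gamma> L by (simp add: power_mult_distrib)
  moreover have "0 \<le> (1 - \<gamma> / 4) * sqrt (1 + 4 * \<gamma> * (L + 1))"
    using p \<gamma> L by (intro mult_nonneg_nonneg) auto
  ultimately show ?thesis
    by (rule power2_le_imp_le)
qed

lemma gauss_erf_drift:
  fixes \<gamma> L c ell w t :: real
  assumes \<gamma>: "0 < \<gamma>" and L: "0 \<le> L" and small: "\<gamma> * (L + 1) \<le> 1 / 2" and c: "0 \<le> c"
    and ell: "0 < ell" and w: "0 \<le> w" and t: "t \<le> (1 + \<gamma> * L) * w"
  shows "gauss_erf ((t + \<gamma> * c) / ell / sqrt (1 + 4 * \<gamma> * (L + 1)))
    \<le> gauss_erf (w / ell) - \<gamma> / 4 * (w / ell) * gauss (w / ell) + \<gamma> * c / ell"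
proof -
  define D where "D = sqrt (1 + 4 * \<gamma> * (L + 1))"
  have D: "1 \<le> D"
    unfolding D_def using \<gamma> L by simp
  have "0 \<le> \<gamma> * L"
    using \<gamma> L by simp
  then have \<gamma>_half: "\<gamma> \<le> 1 / 2"
    using small by (simp add: algebra_simps)
  have "t \<le> (1 - \<gamma> / 4) * D * w"
    using t growth_le_smoothing_factor[OF \<gamma> L small] w unfolding D_def
    by (meson mult_right_mono order_trans)
  then have "t / (ell * D) \<le> (1 - \<gamma> / 4) * D * w / (ell * D)"
    using ell D by (intro divide_right_mono) auto
  then have "t / (ell * D) \<le> (1 - \<gamma> / 4) * (w / ell)"
    using ell D by simp
  moreover have "\<gamma> * c / (ell * D) \<le> \<gamma> * c / ell"
    using \<gamma> c ell D by (intro divide_left_mono) (auto intro!: mult_pos_pos)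
  ultimately have "(t + \<gamma> * c) / ell / D \<le> (1 - \<gamma> / 4) * (w / ell) + \<gamma> * c / ell"
    by (simp add: add_divide_distrib divide_divide_eq_left)
  then have "gauss_erf ((t + \<gamma> * c) / ell / D) \<le> gauss_erf ((1 - \<gamma> / 4) * (w / ell) + \<gamma> * c / ell)"
    by (rule gauss_erf_mono)
  also have "\<dots> \<le> gauss_erf ((1 - \<gamma> / 4) * (w / ell)) + \<gamma> * c / ell"
    using gauss_erf_lipschitz[of "(1 - \<gamma> / 4) * (w / ell)" "(1 - \<gamma> / 4) * (w / ell) + \<gamma> * c / ell"] \<gamma> c ell
    by simp
  also have "gauss_erf ((1 - \<gamma> / 4) * (w / ell)) \<le> gauss_erf (w / ell) - \<gamma> / 4 * (w / ell) * gauss (w / ell)"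
    using gauss_erf_shrink[of "w / ell" "1 - \<gamma> / 4"] w ell \<gamma> \<gamma>_half by simp
  finally show ?thesis
    unfolding D_def by simp
qed

lemma sinh_drift_near:
  fixes \<gamma> L c a \<sigma> w t R :: real
  assumes \<gamma>: "0 < \<gamma>" and L: "0 \<le> L" and \<gamma>L: "\<gamma> * L \<le> 1" and \<gamma>1: "\<gamma> \<le> 1"
    and \<gamma>c: "\<gamma> * c \<le> 1" and c: "0 \<le> c" and a: "0 < a" and noise: "2 * a\<^sup>2 * \<sigma>\<^sup>2 * \<gamma> \<le> 1 / 2"
    and w: "0 \<le> w" "w \<le> R" and t: "0 \<le> t" "t \<le> (1 + \<gamma> * L) * w"
  shows "exp (2 * a\<^sup>2 * (\<sigma>\<^sup>2 * \<gamma>)) * sinh (a * (t + \<gamma> * c))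
    \<le> sinh (a * w) + \<gamma> * (cosh (a * (2 * R + 1)) * a * (L + 8 * a\<^sup>2 * \<sigma>\<^sup>2) * w
                           + cosh (a * (2 * R + 1)) * a * (1 + 4 * a\<^sup>2 * \<sigma>\<^sup>2) * c)"
proof -
  define K where "K = cosh (a * (2 * R + 1))"
  define y where "y = (1 + \<gamma> * L) * w + \<gamma> * c"
  have y: "w \<le> y" "y \<le> 2 * R + 1" "y \<le> 2 * w + c"
  proof -
    show "w \<le> y"
      unfolding y_def using \<gamma> L w c by (simp add: algebra_simps)
    have "\<gamma> * L * w \<le> 1 * R"
      using \<gamma>L w \<gamma> L by (intro mult_mono) auto
    moreover have "\<gamma> * L * w \<le> 1 * w"
      using \<gamma>L w by (intro mult_right_mono) auto
    moreover have "\<gamma> * c \<le> 1 * c"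
      using \<gamma>1 c by (intro mult_right_mono) auto
    ultimately show "y \<le> 2 * R + 1" "y \<le> 2 * w + c"
      unfolding y_def using w \<gamma>c by (simp_all add: algebra_simps)
  qed
  have cosh_y: "cosh (a * y) \<le> K"
    unfolding K_def using y a w by (subst cosh_real_nonneg_le_iff) (auto intro!: mult_left_mono)
  have "exp (2 * a\<^sup>2 * (\<sigma>\<^sup>2 * \<gamma>)) \<le> 1 + 4 * a\<^sup>2 * \<sigma>\<^sup>2 * \<gamma>"
    using exp_bound_lemma[of "2 * a\<^sup>2 * (\<sigma>\<^sup>2 * \<gamma>)"] noise \<gamma> by (simp add: algebra_simps)
  moreover have "0 \<le> sinh (a * (t + \<gamma> * c))" "sinh (a * (t + \<gamma> * c)) \<le> sinh (a * y)"
    using a t \<gamma> c by (auto simp: y_def intro!: mult_left_mono)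
  ultimately have "exp (2 * a\<^sup>2 * (\<sigma>\<^sup>2 * \<gamma>)) * sinh (a * (t + \<gamma> * c)) \<le> (1 + 4 * a\<^sup>2 * \<sigma>\<^sup>2 * \<gamma>) * sinh (a * y)"
    using \<gamma> by (intro mult_mono) auto
  also have "\<dots> = sinh (a * y) + 4 * a\<^sup>2 * \<sigma>\<^sup>2 * \<gamma> * sinh (a * y)"
    by (simp add: algebra_simps)
  also have "\<dots> \<le> (sinh (a * w) + a * \<gamma> * (L * w + c) * K) + 4 * a\<^sup>2 * \<sigma>\<^sup>2 * \<gamma> * (a * (2 * w + c) * K)"
  proof (intro add_mono mult_left_mono)
    have "sinh (a * y) - sinh (a * w) \<le> (a * y - a * w) * cosh (a * y)"
      using sinh_diff_bounds(2)[of "a * w" "a * y"] a w y by (simp add: mult_left_mono)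
    also have "\<dots> \<le> a * \<gamma> * (L * w + c) * K"
    proof -
      have "a * y - a * w = a * \<gamma> * (L * w + c)" "0 \<le> a * \<gamma> * (L * w + c)"
        unfolding y_def using a \<gamma> L w c by (simp_all add: algebra_simps)
      then show ?thesis
        using cosh_y by (simp add: mult_left_mono)
    qed
    finally show "sinh (a * y) \<le> sinh (a * w) + a * \<gamma> * (L * w + c) * K"
      by simp
    have "sinh (a * y) \<le> a * y * cosh (a * y)"
      using sinh_le_mult_cosh[of "a * y"] a y w by simp
    also have "\<dots> \<le> a * (2 * w + c) * K"
      using y cosh_y a w by (intro mult_mono) auto
    finally show "sinh (a * y) \<le> a * (2 * w + c) * K" .
  qed (use \<gamma> in simp)
  also have "\<dots> = sinh (a * w) + \<gamma> * (K * a * (L + 8 * a\<^sup>2 * \<sigma>\<^sup>2) * w + K * a * (1 + 4 * a\<^sup>2 * \<sigma>\<^sup>2) * c)"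
    by (simp add: algebra_simps power2_eq_square)
  finally show ?thesis
    unfolding K_def .
qed

lemma sinh_drift_far:
  fixes \<gamma> m c a \<sigma> w t :: real
  assumes \<gamma>: "0 < \<gamma>" and \<gamma>m: "\<gamma> * m \<le> 1" and m: "0 < m" and c: "0 \<le> c" and a: "0 < a"
    and w: "0 \<le> w" and far: "2 * (c + 2 * a * \<sigma>\<^sup>2) \<le> m * w"
    and t: "0 \<le> t" "t \<le> (1 - \<gamma> * m) * w"
  shows "exp (2 * a\<^sup>2 * (\<sigma>\<^sup>2 * \<gamma>)) * sinh (a * (t + \<gamma> * c)) \<le> (1 - \<gamma> * m / 2) * sinh (a * w)"
proof -
  have "exp (2 * a\<^sup>2 * (\<sigma>\<^sup>2 * \<gamma>)) * sinh (a * (t + \<gamma> * c))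
      \<le> sinh (a * (t + \<gamma> * c) + 2 * a\<^sup>2 * (\<sigma>\<^sup>2 * \<gamma>))"
    using a t \<gamma> c by (intro exp_mult_sinh_le_sinh_add) auto
  also have "\<dots> \<le> sinh ((1 - \<gamma> * m / 2) * (a * w))"
  proof -
    have "\<gamma> * (c + 2 * a * \<sigma>\<^sup>2) \<le> \<gamma> * (m * w / 2)"
      using far \<gamma> by (intro mult_left_mono) auto
    then have "a * (t + \<gamma> * (c + 2 * a * \<sigma>\<^sup>2)) \<le> a * ((1 - \<gamma> * m) * w + \<gamma> * (m * w / 2))"
      using t a by (intro mult_left_mono) auto
    then show ?thesis
      by (simp add: algebra_simps power2_eq_square)
  qed
  also have "\<dots> \<le> (1 - \<gamma> * m / 2) * sinh (a * w)"
    using \<gamma>m \<gamma> m a w by (intro sinh_mult_le) auto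
  finally show ?thesis .
qed

definition lyapunov :: "real \<Rightarrow> real \<Rightarrow> real \<Rightarrow> real \<Rightarrow> real" where
  "lyapunov ell A a w = gauss_erf (w / ell) + A * sinh (a * w)"

definition smoothed_lyapunov :: "real \<Rightarrow> real \<Rightarrow> real \<Rightarrow> real \<Rightarrow> real \<Rightarrow> real" where
  "smoothed_lyapunov ell A a s x
     = gauss_erf (x / ell / sqrt (1 + 4 * s / ell\<^sup>2)) + A * (exp (2 * a\<^sup>2 * s) * sinh (a * x))"

lemma lyapunov_minus: "lyapunov ell A a (- w) = - lyapunov ell A a w"
  unfolding lyapunov_def by (simp add: gauss_erf_minus)

lemma borel_measurable_lyapunov [measurable]: "lyapunov ell A a \<in> borel_measurable borel"
proof -
  have [measurable]: "(\<lambda>w. sinh (a * w)) \<in> borel_measurable borel"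
    by (intro borel_measurable_continuous_onI continuous_intros)
  show ?thesis
    unfolding lyapunov_def[abs_def] by measurable
qed

lemma lyapunov_nonneg: "0 < ell \<Longrightarrow> 0 \<le> A \<Longrightarrow> 0 \<le> a \<Longrightarrow> 0 \<le> w \<Longrightarrow> 0 \<le> lyapunov ell A a w"
  unfolding lyapunov_def by (simp add: gauss_erf_nonneg)

lemma lyapunov_drift_near:
  fixes \<gamma> L c a \<sigma> ell R A \<kappa> C w t :: real
  defines "K \<equiv> cosh (a * (2 * R + 1))"
  assumes \<gamma>: "0 < \<gamma>" and small: "\<gamma> * (L + 1) \<le> 1 / 2" and \<gamma>c: "\<gamma> * c \<le> 1"
    and noise: "2 * a\<^sup>2 * \<sigma>\<^sup>2 * \<gamma> \<le> 1 / 2"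
    and L: "0 \<le> L" and c: "0 \<le> c" and a: "0 < a" and ell: "0 < ell" and A: "0 < A" and \<kappa>: "0 \<le> \<kappa>"
    and w: "0 \<le> w" "w \<le> R" and t: "0 \<le> t" "t \<le> (1 + \<gamma> * L) * w"
    and gain: "A * (K * a * (L + 8 * a\<^sup>2 * \<sigma>\<^sup>2)) \<le> gauss (R / ell) / (8 * ell)"
    and rate: "\<kappa> * (1 / ell + A * a * K) \<le> gauss (R / ell) / (8 * ell)"
    and C: "1 / ell + A * (K * a * (1 + 4 * a\<^sup>2 * \<sigma>\<^sup>2)) \<le> C"
  shows "gauss_erf ((t + \<gamma> * c) / ell / sqrt (1 + 4 * \<gamma> * (L + 1)))
      + A * (exp (2 * a\<^sup>2 * (\<sigma>\<^sup>2 * \<gamma>)) * sinh (a * (t + \<gamma> * c)))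
    \<le> (1 - \<kappa> * \<gamma>) * lyapunov ell A a w + \<gamma> * c * C"
proof -
  define g0 where "g0 = gauss (R / ell) / (4 * ell)"
  define D1 where "D1 = K * a * (L + 8 * a\<^sup>2 * \<sigma>\<^sup>2)"
  define D2 where "D2 = K * a * (1 + 4 * a\<^sup>2 * \<sigma>\<^sup>2)"
  have "0 \<le> \<gamma> * L"
    using \<gamma> L by simp
  then have \<gamma>L: "\<gamma> * L \<le> 1" and \<gamma>1: "\<gamma> \<le> 1"
    using small \<gamma> by (simp_all add: algebra_simps)
  have erf_part: "gauss_erf ((t + \<gamma> * c) / ell / sqrt (1 + 4 * \<gamma> * (L + 1)))
      \<le> gauss_erf (w / ell) - \<gamma> * g0 * w + \<gamma> * c / ell"
  proof -
    have "gauss (R / ell) \<le> gauss (w / ell)"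
      using w ell by (intro gauss_antimono_abs) (auto simp: divide_right_mono)
    then have "\<gamma> * g0 * w \<le> \<gamma> / 4 * (w / ell) * gauss (w / ell)"
      unfolding g0_def using \<gamma> w ell by (simp add: field_simps mult_left_mono)
    then show ?thesis
      using gauss_erf_drift[OF \<gamma> L small c ell w(1) t(2)] by linarith
  qed
  have sinh_part: "exp (2 * a\<^sup>2 * (\<sigma>\<^sup>2 * \<gamma>)) * sinh (a * (t + \<gamma> * c)) \<le> sinh (a * w) + \<gamma> * (D1 * w + D2 * c)"
    unfolding D1_def D2_def K_def by (rule sinh_drift_near[OF \<gamma> L \<gamma>L \<gamma>1 \<gamma>c c a noise w t])
  have "\<kappa> * lyapunov ell A a w \<le> \<kappa> * (w * (1 / ell + A * a * K))"
  proof (intro mult_left_mono \<kappa>)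
    have "sinh (a * w) \<le> a * w * cosh (a * w)"
      using sinh_le_mult_cosh[of "a * w"] a w by simp
    also have "\<dots> \<le> a * w * K"
      unfolding K_def using a w by (intro mult_left_mono) (auto simp: cosh_real_nonneg_le_iff)
    finally have "A * sinh (a * w) \<le> A * (a * w * K)"
      using A by (intro mult_left_mono) auto
    then show "lyapunov ell A a w \<le> w * (1 / ell + A * a * K)"
      unfolding lyapunov_def using gauss_erf_le[of "w / ell"] w ell
      by (simp add: algebra_simps)
  qed
  also have "\<dots> = w * (\<kappa> * (1 / ell + A * a * K))"
    by simp
  also have "\<dots> \<le> w * (gauss (R / ell) / (8 * ell))"
    using rate w(1) by (rule mult_left_mono)
  also have "\<dots> = g0 / 2 * w"
    unfolding g0_def by simp
  finally have "\<gamma> * (\<kappa> * lyapunov ell A a w) \<le> \<gamma> * (g0 / 2 * w)"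
    using \<gamma> by (intro mult_left_mono) auto
  moreover have "A * D1 \<le> g0 / 2" "\<gamma> * c * (1 / ell + A * D2) \<le> \<gamma> * c * C"
    using gain C \<gamma> c unfolding g0_def D1_def D2_def by (auto intro: mult_left_mono)
  moreover have "\<gamma> * (A * D1 * w) \<le> \<gamma> * (g0 / 2 * w)"
    using calculation(2) \<gamma> w by (intro mult_left_mono mult_right_mono) auto
  ultimately show ?thesis
    using erf_part mult_left_mono[OF sinh_part, of A] A unfolding lyapunov_def
    by (simp add: algebra_simps)
qed

lemma lyapunov_drift_far:
  fixes \<gamma> L m c a \<sigma> ell A \<kappa> C w t :: real
  assumes \<gamma>: "0 < \<gamma>" and small: "\<gamma> * (L + 1) \<le> 1 / 2" and \<gamma>m: "\<gamma> * m \<le> 1"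
    and L: "0 \<le> L" and m: "0 < m" and c: "0 \<le> c" and a: "0 < a" and ell: "0 < ell" and A: "0 < A"
    and w: "0 \<le> w" and far: "2 * (c + 2 * a * \<sigma>\<^sup>2) \<le> m * w"
    and t: "0 \<le> t" "t \<le> (1 + \<gamma> * L) * w" "t \<le> (1 - \<gamma> * m) * w"
    and rate: "0 \<le> \<kappa>" "\<kappa> \<le> m / 4" "\<kappa> \<le> A * m * a * ell / 4"
    and C: "1 / ell \<le> C"
  shows "gauss_erf ((t + \<gamma> * c) / ell / sqrt (1 + 4 * \<gamma> * (L + 1)))
      + A * (exp (2 * a\<^sup>2 * (\<sigma>\<^sup>2 * \<gamma>)) * sinh (a * (t + \<gamma> * c)))
    \<le> (1 - \<kappa> * \<gamma>) * lyapunov ell A a w + \<gamma> * c * C"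
proof -
  have erf_part: "gauss_erf ((t + \<gamma> * c) / ell / sqrt (1 + 4 * \<gamma> * (L + 1))) \<le> gauss_erf (w / ell) + \<gamma> * c / ell"
  proof -
    have "0 \<le> \<gamma> / 4 * (w / ell) * gauss (w / ell)"
      using \<gamma> w ell gauss_pos[of "w / ell"] by simp
    then show ?thesis
      using gauss_erf_drift[OF \<gamma> L small c ell w t(2)] by linarith
  qed
  have sinh_part: "exp (2 * a\<^sup>2 * (\<sigma>\<^sup>2 * \<gamma>)) * sinh (a * (t + \<gamma> * c)) \<le> (1 - \<gamma> * m / 2) * sinh (a * w)"
    by (rule sinh_drift_far[OF \<gamma> \<gamma>m m c a w far t(1) t(3)])
  have "\<kappa> * gauss_erf (w / ell) \<le> \<kappa> * (sinh (a * w) / (a * ell))"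
  proof (intro mult_left_mono rate)
    have "gauss_erf (w / ell) \<le> a * w / (a * ell)"
      using gauss_erf_le[of "w / ell"] a ell w by simp
    also have "\<dots> \<le> sinh (a * w) / (a * ell)"
      using le_sinh[of "a * w"] a ell w by (intro divide_right_mono) auto
    finally show "gauss_erf (w / ell) \<le> sinh (a * w) / (a * ell)" .
  qed
  also have "\<dots> \<le> A * m * a * ell / 4 * (sinh (a * w) / (a * ell))"
    using rate a ell w by (intro mult_right_mono) auto
  also have "\<dots> = A * m / 4 * sinh (a * w)"
    using a ell by (simp add: field_simps)
  finally have erf_rate: "\<kappa> * gauss_erf (w / ell) \<le> A * m / 4 * sinh (a * w)" .
  have "\<kappa> * lyapunov ell A a w = \<kappa> * gauss_erf (w / ell) + \<kappa> * (A * sinh (a * w))"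
    unfolding lyapunov_def by (simp add: distrib_left)
  also have "\<dots> \<le> A * m / 4 * sinh (a * w) + m / 4 * (A * sinh (a * w))"
    using erf_rate A a w by (intro add_mono mult_right_mono rate(2)) auto
  finally have "\<kappa> * lyapunov ell A a w \<le> A * m / 2 * sinh (a * w)"
    by (simp add: algebra_simps)
  then have "\<gamma> * (\<kappa> * lyapunov ell A a w) \<le> \<gamma> * (A * m / 2 * sinh (a * w))"
    using \<gamma> by (intro mult_left_mono) auto
  moreover have "\<gamma> * c / ell \<le> \<gamma> * c * C"
    using C \<gamma> c mult_left_mono[OF C, of "\<gamma> * c"] by simp
  ultimately show ?thesis
    using erf_part mult_left_mono[OF sinh_part, of A] A unfolding lyapunov_def
    by (simp add: algebra_simps)
qed

lemma lyapunov_drift: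
  fixes \<sigma> L m c a R :: real
  assumes \<sigma>: "0 < \<sigma>" and L: "0 \<le> L" and m: "0 < m" and c: "0 \<le> c" and a: "0 < a"
  defines "ell \<equiv> \<sigma> / sqrt (L + 1)"
  shows "\<exists>A \<kappa> C \<gamma>1. 0 < A \<and> 0 < \<kappa> \<and> 0 \<le> C \<and> 0 < \<gamma>1 \<and> \<kappa> * \<gamma>1 < 1 \<and>
    (\<forall>\<gamma> w t. 0 < \<gamma> \<longrightarrow> \<gamma> \<le> \<gamma>1 \<longrightarrow> 0 \<le> w \<longrightarrow> 0 \<le> t \<longrightarrow> t \<le> (1 + \<gamma> * L) * w \<longrightarrow>
       (R < w \<longrightarrow> t \<le> (1 - \<gamma> * m) * w) \<longrightarrow>
       smoothed_lyapunov ell A a (\<sigma>\<^sup>2 * \<gamma>) (t + \<gamma> * c) \<le> (1 - \<kappa> * \<gamma>) * lyapunov ell A a w + \<gamma> * c * C)"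
proof -
  \<comment> \<open>Beyond \<open>R'\<close> the contraction of \<open>\<tau>\<^sub>\<gamma>\<close> beats the Gaussian factor of the \<open>sinh\<close> part;
    below \<open>R'\<close>, \<open>A\<close> is small enough that the growth of the \<open>sinh\<close> part costs at most half
    of the gain from the concavity of \<open>gauss_erf\<close>.\<close>
  define R' where "R' = max R (2 * (c + 2 * a * \<sigma>\<^sup>2) / m)"
  define K where "K = cosh (a * (2 * R' + 1))"
  define g where "g = gauss (R' / ell) / (8 * ell)"
  define A where "A = g / (K * a * (L + 8 * a\<^sup>2 * \<sigma>\<^sup>2))"
  define \<kappa> where "\<kappa> = min (m / 4) (min (A * m * a * ell / 4) (g / (1 / ell + A * a * K)))"
  define C where "C = 1 / ell + A * (K * a * (1 + 4 * a\<^sup>2 * \<sigma>\<^sup>2))"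
  define \<gamma>1 where "\<gamma>1 = min (1 / (2 * (L + 1))) (min (1 / (c + 1)) (min (1 / (4 * a\<^sup>2 * \<sigma>\<^sup>2 + 1)) (1 / (m + 1))))"
  have ell: "0 < ell"
    unfolding ell_def using \<sigma> L by simp
  have K: "1 \<le> K"
    unfolding K_def by (rule cosh_real_ge_1)
  have g: "0 < g"
    unfolding g_def using ell gauss_pos by simp
  have A: "0 < A"
    unfolding A_def using g K a L \<sigma> by (auto intro!: divide_pos_pos mult_pos_pos add_nonneg_pos)
  have \<kappa>: "0 < \<kappa>" "\<kappa> \<le> m / 4" "\<kappa> \<le> A * m * a * ell / 4" "\<kappa> * (1 / ell + A * a * K) \<le> g"
  proof -
    have pos: "0 < 1 / ell + A * a * K"
      using ell A a K by (intro add_pos_nonneg) auto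
    then show "0 < \<kappa>"
      unfolding \<kappa>_def using m A a ell g by auto
    show "\<kappa> \<le> m / 4" "\<kappa> \<le> A * m * a * ell / 4"
      unfolding \<kappa>_def by (meson min.cobounded1 min.cobounded2 order_trans)+
    have "\<kappa> \<le> g / (1 / ell + A * a * K)"
      unfolding \<kappa>_def by (meson min.cobounded2 order_trans)
    then show "\<kappa> * (1 / ell + A * a * K) \<le> g"
      using pos by (simp add: le_divide_eq)
  qed
  have C: "0 \<le> C"
    unfolding C_def using ell A K a by simp
  have \<gamma>1: "0 < \<gamma>1"
    unfolding \<gamma>1_def using L c m a \<sigma> by (auto intro!: add_pos_nonneg)
  have "\<kappa> * \<gamma>1 \<le> m / 4 * (1 / (m + 1))"
    using \<kappa> \<gamma>1 m unfolding \<gamma>1_def by (intro mult_mono) auto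
  also have "\<dots> < 1"
    using m by (simp add: field_simps)
  finally have \<kappa>\<gamma>1: "\<kappa> * \<gamma>1 < 1" .
  have drift: "smoothed_lyapunov ell A a (\<sigma>\<^sup>2 * \<gamma>) (t + \<gamma> * c) \<le> (1 - \<kappa> * \<gamma>) * lyapunov ell A a w + \<gamma> * c * C"
    if \<gamma>: "0 < \<gamma>" "\<gamma> \<le> \<gamma>1" and w: "0 \<le> w" and t: "0 \<le> t" "t \<le> (1 + \<gamma> * L) * w"
      and t_far: "R < w \<Longrightarrow> t \<le> (1 - \<gamma> * m) * w" for \<gamma> w t
  proof -
    have small: "\<gamma> * (L + 1) \<le> 1 / 2" and \<gamma>c: "\<gamma> * c \<le> 1"
      and noise: "2 * a\<^sup>2 * \<sigma>\<^sup>2 * \<gamma> \<le> 1 / 2" and \<gamma>m: "\<gamma> * m \<le> 1"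
      using \<gamma> L c m unfolding \<gamma>1_def by (auto simp: le_divide_eq field_simps add_pos_nonneg)
    have "4 * (\<sigma>\<^sup>2 * \<gamma>) / ell\<^sup>2 = 4 * \<gamma> * (L + 1)"
      unfolding ell_def using \<sigma> L by (simp add: power_divide)
    moreover have "gauss_erf ((t + \<gamma> * c) / ell / sqrt (1 + 4 * \<gamma> * (L + 1)))
         + A * (exp (2 * a\<^sup>2 * (\<sigma>\<^sup>2 * \<gamma>)) * sinh (a * (t + \<gamma> * c)))
       \<le> (1 - \<kappa> * \<gamma>) * lyapunov ell A a w + \<gamma> * c * C"
    proof (cases "w \<le> R'")
      case True
      have "K * a * (L + 8 * a\<^sup>2 * \<sigma>\<^sup>2) \<noteq> 0"
        using K a L \<sigma> by (intro mult_pos_pos add_nonneg_pos less_imp_neq[symmetric]) auto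
      then have "A * (K * a * (L + 8 * a\<^sup>2 * \<sigma>\<^sup>2)) = g"
        unfolding A_def by simp
      then have "A * (K * a * (L + 8 * a\<^sup>2 * \<sigma>\<^sup>2)) \<le> gauss (R' / ell) / (8 * ell)"
        unfolding g_def by simp
      moreover have "\<kappa> * (1 / ell + A * a * K) \<le> gauss (R' / ell) / (8 * ell)"
        using \<kappa>(4) unfolding g_def .
      moreover have "1 / ell + A * (K * a * (1 + 4 * a\<^sup>2 * \<sigma>\<^sup>2)) \<le> C"
        unfolding C_def by simp
      ultimately show ?thesis
        unfolding K_def
        by (rule lyapunov_drift_near[OF \<gamma>(1) small \<gamma>c noise L c a ell A less_imp_le[OF \<kappa>(1)] w True t])
    next
      case False
      have "2 * (c + 2 * a * \<sigma>\<^sup>2) / m \<le> w"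
        using False unfolding R'_def by simp
      then have "2 * (c + 2 * a * \<sigma>\<^sup>2) \<le> m * w"
        using m by (simp add: pos_divide_le_eq mult.commute)
      moreover have "t \<le> (1 - \<gamma> * m) * w"
        using False t_far unfolding R'_def by simp
      moreover have "1 / ell \<le> C"
        unfolding C_def using A K a by simp
      ultimately show ?thesis
        using \<kappa> by (intro lyapunov_drift_far[OF \<gamma>(1) small \<gamma>m L m c a ell A w _ t]) auto
    qed
    ultimately show ?thesis
      unfolding smoothed_lyapunov_def by simp
  qed
  show ?thesis
    using A \<kappa>(1) C \<gamma>1 \<kappa>\<gamma>1 drift by blast
qed

section \<open>Moments of the invariant measure\<close>

lemma Qker_nn_integral_lyapunov:
  assumes s: "0 < s" and ell: "0 < ell" and A: "0 \<le> A" and a: "0 \<le> a" and x: "0 \<le> x"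
  shows "Qker_nn_integral s (\<lambda>y. ennreal (lyapunov ell A a y)) x = ennreal (smoothed_lyapunov ell A a s x)"
proof -
  define t where "t = 2 * sqrt s / ell"
  have t: "t \<noteq> 0" "t\<^sup>2 = 4 * s / ell\<^sup>2"
    unfolding t_def using s ell by (simp_all add: power_divide power_mult_distrib)
  have split: "lyapunov ell A a (x - 2 * sqrt s * g) * phi g
      = gauss_erf (x / ell - t * g) * std_normal_density g
        + A * (sinh (a * (x - 2 * sqrt s * g)) * std_normal_density g)" for g
    unfolding lyapunov_def t_def phi_eq_std_normal_density using ell
    by (simp add: algebra_simps diff_divide_distrib)
  have int: "integrable lborel (\<lambda>g. lyapunov ell A a (x - 2 * sqrt s * g) * phi g)"
    unfolding split
    by (intro Bochner_Integration.integrable_add integrable_mult_right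
        integrable_gauss_erf_shift_std_normal integrable_sinh_shift_std_normal)
  have "(\<integral>g. lyapunov ell A a (x - 2 * sqrt s * g) * phi g \<partial>lborel) = smoothed_lyapunov ell A a s x"
    unfolding split smoothed_lyapunov_def using s t
    by (simp add: integrable_gauss_erf_shift_std_normal integrable_sinh_shift_std_normal
        integral_gauss_erf_shift_std_normal integral_sinh_shift_std_normal power_mult_distrib)
  moreover have "Qker_nn_integral s (\<lambda>y. ennreal (lyapunov ell A a y)) x
      = ennreal (\<integral>g. lyapunov ell A a (x - 2 * sqrt s * g) * phi g \<partial>lborel)"
    using s x int ell A a
    by (intro Qker_nn_integral_odd) (auto simp: lyapunov_minus intro!: lyapunov_nonneg)
  ultimately show ?thesis
    by simp
qed

lemma AE_nonneg_if_emeasure_atLeast_0: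
  assumes "prob_space \<mu>" and "emeasure \<mu> {0..} = 1"
  shows "AE w in \<mu>. 0 \<le> (w :: real)"
proof -
  interpret prob_space \<mu> by fact
  have "prob {0..} = 1"
    using assms(2) by (simp add: emeasure_eq_measure)
  then have "AE w in \<mu>. w \<in> {0..}"
    by (rule AE_prob_1)
  then show ?thesis
    by simp
qed

lemma nn_integral_Qker_invariant:
  fixes \<mu> :: "real measure" and T :: "real \<Rightarrow> real \<Rightarrow> real"
  assumes \<sigma>: "0 < \<sigma>" and \<gamma>: "0 < \<gamma>" and T_mono: "mono_on {0..} (T \<gamma>)"
    and sets [measurable_cong]: "sets \<mu> = sets borel" and prob: "prob_space \<mu>"
    and supp: "emeasure \<mu> {0..} = 1"
    and inv: "\<And>B. B \<in> sets borel \<Longrightarrow> emeasure \<mu> B = (\<integral>\<^sup>+ w. ennreal (Qker \<sigma> c T \<gamma> w B) \<partial>\<mu>)"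
    and f: "f \<in> borel_measurable \<mu>"
  shows "(\<integral>\<^sup>+w. f w \<partial>\<mu>) = (\<integral>\<^sup>+w. Qker_nn_integral (\<sigma>\<^sup>2 * \<gamma>) f (T \<gamma> (max 0 w) + \<gamma> * c) \<partial>\<mu>)"
proof (rule nn_integral_invariant_Qker_nn_integral[OF sets])
  have "mono (\<lambda>w. T \<gamma> (max 0 w))"
    using T_mono by (auto simp: mono_def mono_on_def max_def)
  then have [measurable]: "(\<lambda>w. T \<gamma> (max 0 w)) \<in> borel_measurable borel"
    by (rule borel_measurable_mono)
  show "(\<lambda>w. T \<gamma> (max 0 w) + \<gamma> * c) \<in> borel_measurable borel"
    by measurable
  show "emeasure \<mu> B = (\<integral>\<^sup>+w. Qker_nn_integral (\<sigma>\<^sup>2 * \<gamma>) (indicator B) (T \<gamma> (max 0 w) + \<gamma> * c) \<partial>\<mu>)"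
    if "B \<in> sets borel" for B
    unfolding inv[OF that] using AE_nonneg_if_emeasure_atLeast_0[OF prob supp]
    by (intro nn_integral_cong_AE) (auto simp: Qker_eq_Qker_nn_integral[OF \<sigma> \<gamma> that])
  show "f \<in> borel_measurable borel"
    using f by (simp add: measurable_cong_sets[OF sets refl])
qed

lemma invariant_lyapunov_bound:
  fixes \<mu> :: "real measure" and T :: "real \<Rightarrow> real \<Rightarrow> real"
  assumes \<sigma>: "0 < \<sigma>" and \<gamma>: "0 < \<gamma>" and c: "0 \<le> c" and ell: "0 < ell" and A: "0 \<le> A" and a: "0 \<le> a"
    and T_nonneg: "\<And>r. 0 \<le> r \<Longrightarrow> 0 \<le> T \<gamma> r" and T_mono: "mono_on {0..} (T \<gamma>)"
    and sets: "sets \<mu> = sets borel" and prob: "prob_space \<mu>" and supp: "emeasure \<mu> {0..} = 1"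
    and inv: "\<And>B. B \<in> sets borel \<Longrightarrow> emeasure \<mu> B = (\<integral>\<^sup>+ w. ennreal (Qker \<sigma> c T \<gamma> w B) \<partial>\<mu>)"
    and drift: "\<And>w. 0 \<le> w \<Longrightarrow>
      smoothed_lyapunov ell A a (\<sigma>\<^sup>2 * \<gamma>) (T \<gamma> w + \<gamma> * c) \<le> \<rho> * lyapunov ell A a w + B"
    and \<rho>: "0 \<le> \<rho>" "\<rho> < 1" and B: "0 \<le> B"
  shows "(\<integral>\<^sup>+w. ennreal (lyapunov ell A a w) \<partial>\<mu>) \<le> ennreal (B / (1 - \<rho>))"
proof (rule invariant_nn_integral_le_drift[OF prob nn_integral_Qker_invariant[OF \<sigma> \<gamma> T_mono sets prob supp inv]])
  have s: "0 < \<sigma>\<^sup>2 * \<gamma>"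
    using \<sigma> \<gamma> by simp
  show "Qker_nn_integral (\<sigma>\<^sup>2 * \<gamma>) f x \<le> Qker_nn_integral (\<sigma>\<^sup>2 * \<gamma>) h x" if "\<And>y. f y \<le> h y" for f h x
    using that by (rule Qker_nn_integral_mono)
  show "Qker_nn_integral (\<sigma>\<^sup>2 * \<gamma>) (\<lambda>y. k * f y) x = k * Qker_nn_integral (\<sigma>\<^sup>2 * \<gamma>) f x"
    if "f \<in> borel_measurable \<mu>" for f k x
    using that by (intro Qker_nn_integral_cmult) (simp add: measurable_cong_sets[OF sets refl])
  show "Qker_nn_integral (\<sigma>\<^sup>2 * \<gamma>) f x \<le> k" if "\<And>y. f y \<le> k" for f k x
    using s that by (rule Qker_nn_integral_le_const)
  show "AE w in \<mu>. Qker_nn_integral (\<sigma>\<^sup>2 * \<gamma>) (\<lambda>y. ennreal (lyapunov ell A a y)) (T \<gamma> (max 0 w) + \<gamma> * c)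
      \<le> ennreal \<rho> * ennreal (lyapunov ell A a w) + ennreal B"
    using AE_nonneg_if_emeasure_atLeast_0[OF prob supp]
  proof eventually_elim
    case (elim w)
    have x: "0 \<le> T \<gamma> w + \<gamma> * c"
      using T_nonneg[OF elim] \<gamma> c by simp
    have max_eq: "T \<gamma> (max 0 w) = T \<gamma> w"
      using elim by simp
    have "Qker_nn_integral (\<sigma>\<^sup>2 * \<gamma>) (\<lambda>y. ennreal (lyapunov ell A a y)) (T \<gamma> (max 0 w) + \<gamma> * c)
        \<le> ennreal (\<rho> * lyapunov ell A a w + B)"
      unfolding max_eq Qker_nn_integral_lyapunov[OF s ell A a x] by (intro ennreal_leI drift elim)
    then show ?case
      using \<rho> B lyapunov_nonneg[OF ell A a elim] by (simp add: ennreal_plus ennreal_mult)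
  qed
qed (use \<rho> B in \<open>simp_all add: measurable_cong_sets[OF sets refl]\<close>)

lemma exp_minus_1_le_lyapunov:
  assumes A: "0 < A" and ell: "0 < ell" and a: "0 \<le> a"
  shows "ennreal (exp (a * w) - 1) \<le> ennreal (2 / A) * ennreal (lyapunov ell A a w)"
proof (cases "0 \<le> w")
  case True
  have "exp (a * w) - 1 \<le> 2 * sinh (a * w)"
    using a True by (intro exp_minus_1_le_2_sinh) simp
  also have "\<dots> \<le> 2 / A * lyapunov ell A a w"
    unfolding lyapunov_def using A gauss_erf_nonneg[of "w / ell"] True ell by (simp add: field_simps)
  finally show ?thesis
    using A by (simp add: ennreal_leI ennreal_mult'[symmetric])
next
  case False
  then have "exp (a * w) \<le> 1"
    using a by (simp add: mult_nonneg_nonpos)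
  then show ?thesis
    by (simp add: ennreal_neg)
qed

lemma le_mult_of_ratio_le:
  fixes f :: "real \<Rightarrow> real"
  assumes "\<forall>r>R. f r / r \<le> q" "0 \<le> R" "R < w"
  shows "f w \<le> q * w"
  using assms by (auto simp: pos_divide_le_eq)

lemma invariant_exp_moment_bound:
  fixes \<mu> :: "real measure" and T :: "real \<Rightarrow> real \<Rightarrow> real"
  assumes \<sigma>: "0 < \<sigma>" and \<gamma>: "0 < \<gamma>" and c: "0 \<le> c" and R: "0 \<le> R" and a: "0 < a"
    and ell: "0 < ell" and A: "0 < A" and \<kappa>: "0 < \<kappa>" "\<kappa> * \<gamma> < 1" and C: "0 \<le> C"
    and T_nonneg: "\<And>r. 0 \<le> r \<Longrightarrow> 0 \<le> T \<gamma> r" and T_mono: "mono_on {0..} (T \<gamma>)"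
    and T_zero: "T \<gamma> 0 = 0"
    and T_L: "\<forall>r>0. T \<gamma> r / r \<le> 1 + \<gamma> * L" and T_m: "\<forall>r>R. T \<gamma> r / r \<le> 1 - \<gamma> * m"
    and sets: "sets \<mu> = sets borel" and prob: "prob_space \<mu>" and supp: "emeasure \<mu> {0..} = 1"
    and inv: "\<And>B. B \<in> sets borel \<Longrightarrow> emeasure \<mu> B = (\<integral>\<^sup>+ w. ennreal (Qker \<sigma> c T \<gamma> w B) \<partial>\<mu>)"
    and drift: "\<And>w t. 0 \<le> w \<Longrightarrow> 0 \<le> t \<Longrightarrow> t \<le> (1 + \<gamma> * L) * w \<Longrightarrow> (R < w \<longrightarrow> t \<le> (1 - \<gamma> * m) * w) \<Longrightarrow>
       smoothed_lyapunov ell A a (\<sigma>\<^sup>2 * \<gamma>) (t + \<gamma> * c) \<le> (1 - \<kappa> * \<gamma>) * lyapunov ell A a w + \<gamma> * c * C"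
  shows "(\<integral>\<^sup>+ w. ennreal (exp (a * w) - 1) \<partial>\<mu>) \<le> ennreal (c * (2 * C / (A * \<kappa>)))"
proof -
  have T_growth: "T \<gamma> w \<le> (1 + \<gamma> * L) * w" if "0 \<le> w" for w
    using that T_zero le_mult_of_ratio_le[OF T_L order_refl] by (cases "w = 0") auto
  have "(\<integral>\<^sup>+w. ennreal (lyapunov ell A a w) \<partial>\<mu>) \<le> ennreal (\<gamma> * c * C / (1 - (1 - \<kappa> * \<gamma>)))"
  proof (rule invariant_lyapunov_bound[OF \<sigma> \<gamma> c ell less_imp_le[OF A] less_imp_le[OF a]
      T_nonneg T_mono sets prob supp inv])
    show "smoothed_lyapunov ell A a (\<sigma>\<^sup>2 * \<gamma>) (T \<gamma> w + \<gamma> * c)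
      \<le> (1 - \<kappa> * \<gamma>) * lyapunov ell A a w + \<gamma> * c * C" if "0 \<le> w" for w
      using drift T_nonneg[OF that] T_growth[OF that] le_mult_of_ratio_le[OF T_m R] that by simp
  qed (use \<kappa> \<gamma> c C in auto)
  also have "\<gamma> * c * C / (1 - (1 - \<kappa> * \<gamma>)) = c * C / \<kappa>"
    using \<gamma> \<kappa> by simp
  finally have lyapunov_bound: "(\<integral>\<^sup>+w. ennreal (lyapunov ell A a w) \<partial>\<mu>) \<le> ennreal (c * C / \<kappa>)" .
  have "(\<integral>\<^sup>+ w. ennreal (exp (a * w) - 1) \<partial>\<mu>) \<le> (\<integral>\<^sup>+w. ennreal (2 / A) * ennreal (lyapunov ell A a w) \<partial>\<mu>)"
    using A ell a by (intro nn_integral_mono exp_minus_1_le_lyapunov) auto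
  also have "\<dots> = ennreal (2 / A) * (\<integral>\<^sup>+w. ennreal (lyapunov ell A a w) \<partial>\<mu>)"
    using sets by (intro nn_integral_cmult) simp
  also have "\<dots> \<le> ennreal (2 / A) * ennreal (c * C / \<kappa>)"
    using lyapunov_bound by (rule mult_left_mono) simp
  also have "\<dots> = ennreal (c * (2 * C / (A * \<kappa>)))"
    using A by (simp add: ennreal_mult'[symmetric] mult.left_commute)
  finally show ?thesis .
qed

theorem theorem12:
  fixes \<sigma> \<gamma>bar cinf R1 L m a :: real
    and \<tau> :: "real \<Rightarrow> real \<Rightarrow> real"
    and \<mu> :: "real \<Rightarrow> real measure"
  assumes "\<sigma> > 0" "\<gamma>bar > 0" "cinf \<ge> 0"
    and "R1 \<ge> 0" "L \<ge> 0" "m > 0"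
    and tau_nonneg: "\<And>\<gamma> r. \<gamma> \<in> {0<..\<gamma>bar} \<Longrightarrow> r \<ge> 0 \<Longrightarrow> \<tau> \<gamma> r \<ge> 0"
    and tau_mono: "\<And>\<gamma>. \<gamma> \<in> {0<..\<gamma>bar} \<Longrightarrow> mono_on {0..} (\<tau> \<gamma>)"
    and tau_zero: "\<And>\<gamma>. \<gamma> \<in> {0<..\<gamma>bar} \<Longrightarrow> \<tau> \<gamma> 0 = 0"
    and tau_L: "\<And>\<gamma>. \<gamma> \<in> {0<..\<gamma>bar} \<Longrightarrow> \<forall>r>0. \<tau> \<gamma> r / r \<le> 1 + \<gamma> * L"
    and tau_m: "\<And>\<gamma>. \<gamma> \<in> {0<..\<gamma>bar} \<Longrightarrow> \<forall>r>R1. \<tau> \<gamma> r / r \<le> 1 - \<gamma> * m"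
    and mu_sets: "\<And>\<gamma>. \<gamma> \<in> {0<..\<gamma>bar} \<Longrightarrow> sets (\<mu> \<gamma>) = sets borel"
    and mu_prob: "\<And>\<gamma>. \<gamma> \<in> {0<..\<gamma>bar} \<Longrightarrow> prob_space (\<mu> \<gamma>)"
    and mu_supp: "\<And>\<gamma>. \<gamma> \<in> {0<..\<gamma>bar} \<Longrightarrow> emeasure (\<mu> \<gamma>) {0..} = 1"
    and mu_inv: "\<And>\<gamma> A. \<gamma> \<in> {0<..\<gamma>bar} \<Longrightarrow> A \<in> sets borel \<Longrightarrow>
        emeasure (\<mu> \<gamma>) A = (\<integral>\<^sup>+ w. ennreal (Qker \<sigma> cinf \<tau> \<gamma> w A) \<partial>\<mu> \<gamma>)"
    and "a > 0"
  shows "\<exists>\<gamma>1 c3. \<gamma>1 \<in> {0<..\<gamma>bar} \<and> c3 \<ge> 0 \<and>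
     (\<forall>\<gamma>\<in>{0<..\<gamma>1}. (\<integral>\<^sup>+ w. ennreal (exp (a * w) - 1) \<partial>\<mu> \<gamma>) \<le> ennreal (cinf * c3))"
proof -
  define ell where "ell = \<sigma> / sqrt (L + 1)"
  have ell: "0 < ell"
    unfolding ell_def using \<open>0 < \<sigma>\<close> \<open>0 \<le> L\<close> by simp
  obtain A \<kappa> C \<gamma>1 where A: "0 < A" and \<kappa>: "0 < \<kappa>" and C: "0 \<le> C" and \<gamma>1: "0 < \<gamma>1" "\<kappa> * \<gamma>1 < 1"
    and drift: "\<forall>\<gamma> w t. 0 < \<gamma> \<longrightarrow> \<gamma> \<le> \<gamma>1 \<longrightarrow> 0 \<le> w \<longrightarrow> 0 \<le> t \<longrightarrow> t \<le> (1 + \<gamma> * L) * w \<longrightarrow>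
       (R1 < w \<longrightarrow> t \<le> (1 - \<gamma> * m) * w) \<longrightarrow>
       smoothed_lyapunov ell A a (\<sigma>\<^sup>2 * \<gamma>) (t + \<gamma> * cinf) \<le> (1 - \<kappa> * \<gamma>) * lyapunov ell A a w + \<gamma> * cinf * C"
    using lyapunov_drift[OF \<open>0 < \<sigma>\<close> \<open>0 \<le> L\<close> \<open>0 < m\<close> \<open>0 \<le> cinf\<close> \<open>0 < a\<close>, of R1, folded ell_def] by blast
  have "(\<integral>\<^sup>+ w. ennreal (exp (a * w) - 1) \<partial>\<mu> \<gamma>) \<le> ennreal (cinf * (2 * C / (A * \<kappa>)))"
    if \<gamma>: "\<gamma> \<in> {0<..min \<gamma>bar \<gamma>1}" for \<gamma>
  proof -
    have \<gamma>_bar: "\<gamma> \<in> {0<..\<gamma>bar}" and \<gamma>_pos: "0 < \<gamma>" and \<gamma>_le: "\<gamma> \<le> \<gamma>1"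
      using \<gamma> by auto
    have "\<kappa> * \<gamma> < 1"
      using \<kappa> \<gamma>1 \<gamma>_le by (meson le_less_trans mult_left_mono less_imp_le)
    then show ?thesis
      using tau_nonneg[OF \<gamma>_bar] mu_inv[OF \<gamma>_bar] drift[rule_format, OF \<gamma>_pos \<gamma>_le]
      by (intro invariant_exp_moment_bound[where T = \<tau>, OF \<open>0 < \<sigma>\<close> \<gamma>_pos \<open>0 \<le> cinf\<close> \<open>0 \<le> R1\<close> \<open>0 < a\<close> ell A \<kappa>
            _ C _ tau_mono[OF \<gamma>_bar] tau_zero[OF \<gamma>_bar] tau_L[OF \<gamma>_bar] tau_m[OF \<gamma>_bar]
            mu_sets[OF \<gamma>_bar] mu_prob[OF \<gamma>_bar] mu_supp[OF \<gamma>_bar]]) auto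
  qed
  then show ?thesis
    using \<open>0 < \<gamma>bar\<close> \<gamma>1 A \<kappa> C by (intro exI[of _ "min \<gamma>bar \<gamma>1"] exI[of _ "2 * C / (A * \<kappa>)"]) auto
qed

end
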